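(* Let $R$ be an almost Dedekind domain and $\mathcal{M}$ its maximal space with the inverse topology. Then: (a) if $\mathcal{M}$ is countable, then $\mathcal{M}$ is scattered; (b) if $\mathcal{M}$ is scattered, then $R$ is SP-scattered.
   Context: $R$ almost Dedekind: $R_M$ is a DVR for each maximal $M$; $K$ quotient field. $\mathcal{M}$ is $\mathrm{Max}(R)$ with the inverse topology (restriction of the coarsest topology on $\mathrm{Spec}(R)$ in which Zariski-open Zariski-compact sets are closed). A space $X$ is scattered if $\partial^\alpha(X)=\emptyset$ for some ordinal $\alpha$, where $\partial^0(X)=X$, $\partial^{\gamma+1}(X)$ is the set of non-isolated points of $\partial^\gamma(X)$, and $\partial^\lambda(X)=\bigcap_{\beta<\lambda}\partial^\beta(X)$ for limit $\lambda$. A maximal ideal $M$ of an almost Dedekind domain $A$ is critical if every finitely generated ideal $J\subseteq M$ satisfies $J\subseteq N^2$ for some maximal $N$; $\mathrm{Crit}(A)$ is the set of these. Recursively: $\mathrm{Crit}_0(R)=\mathrm{Max}(R)$, $T_0=R$; $\mathrm{Crit}_{\gamma+1}(R)=\{P\in\mathrm{Max}(R)\mid PT_\gamma\in\mathrm{Crit}(T_\gamma)\}$; $\mathrm{Crit}_\lambda(R)=\bigcap_{\gamma<\lambda}\mathrm{Crit}_\gamma(R)$ for limit $\lambda$; $T_\alpha=\bigcap\{R_P\mid P\in\mathrm{Crit}_\alpha(R)\}$ ($=K$ if empty). $R$ is SP-scattered if $\mathrm{Crit}_\alpha(R)=\emptyset$ for some ordinal $\alpha$. *)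

theory Defs
  imports "HOL-Analysis.Analysis"
begin

text \<open>Integral domains are represented as subrings of an ambient field of type 'k.
  Ideals, localizations and overrings are subsets of that field.\<close>

definition subring :: "'k::field set \<Rightarrow> bool" where
  "subring A \<longleftrightarrow> 0 \<in> A \<and> 1 \<in> A \<and>
     (\<forall>x\<in>A. \<forall>y\<in>A. x + y \<in> A \<and> x - y \<in> A \<and> x * y \<in> A)"

definition is_ideal :: "'k::field set \<Rightarrow> 'k set \<Rightarrow> bool" where
  "is_ideal A I \<longleftrightarrow> I \<subseteq> A \<and> 0 \<in> I \<and> (\<forall>x\<in>I. \<forall>y\<in>I. x + y \<in> I) \<and>
     (\<forall>a\<in>A. \<forall>x\<in>I. a * x \<in> I)"

definition maximal_ideal :: "'k::field set \<Rightarrow> 'k set \<Rightarrow> bool" where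
  "maximal_ideal A M \<longleftrightarrow> is_ideal A M \<and> M \<noteq> A \<and>
     (\<forall>J. is_ideal A J \<and> M \<subseteq> J \<longrightarrow> J = M \<or> J = A)"

definition max_ideals :: "'k::field set \<Rightarrow> 'k set set" where
  "max_ideals A = {M. maximal_ideal A M}"

definition prime_ideal :: "'k::field set \<Rightarrow> 'k set \<Rightarrow> bool" where
  "prime_ideal A P \<longleftrightarrow> is_ideal A P \<and> P \<noteq> A \<and>
     (\<forall>a\<in>A. \<forall>b\<in>A. a * b \<in> P \<longrightarrow> a \<in> P \<or> b \<in> P)"

definition Spec :: "'k::field set \<Rightarrow> 'k set set" where
  "Spec A = {P. prime_ideal A P}"

definition ideal_gen :: "'k::field set \<Rightarrow> 'k set \<Rightarrow> 'k set" where
  "ideal_gen A S = {x. \<exists>F c. finite F \<and> F \<subseteq> S \<and> (\<forall>f\<in>F. c f \<in> A) \<and>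
                           x = (\<Sum>f\<in>F. c f * f)}"

definition fg_ideal :: "'k::field set \<Rightarrow> 'k set \<Rightarrow> bool" where
  "fg_ideal A J \<longleftrightarrow> (\<exists>F. finite F \<and> F \<subseteq> A \<and> J = ideal_gen A F)"

definition ideal_prod :: "'k::field set \<Rightarrow> 'k set \<Rightarrow> 'k set \<Rightarrow> 'k set" where
  "ideal_prod A I J = ideal_gen A {i * j | i j. i \<in> I \<and> j \<in> J}"

definition principal_ideal_ring :: "'k::field set \<Rightarrow> bool" where
  "principal_ideal_ring A \<longleftrightarrow> (\<forall>I. is_ideal A I \<longrightarrow> (\<exists>a\<in>A. I = ideal_gen A {a}))"

definition localization :: "'k::field set \<Rightarrow> 'k set \<Rightarrow> 'k set" where
  "localization A P = {a / b | a b. a \<in> A \<and> b \<in> A \<and> b \<notin> P}"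

definition DVR :: "'k::field set \<Rightarrow> bool" where
  "DVR V \<longleftrightarrow> subring V \<and> principal_ideal_ring V \<and> (\<exists>!M. maximal_ideal V M) \<and>
     (\<exists>M. maximal_ideal V M \<and> M \<noteq> {0})"

definition almost_Dedekind :: "'k::field set \<Rightarrow> bool" where
  "almost_Dedekind A \<longleftrightarrow> subring A \<and> (\<forall>M\<in>max_ideals A. DVR (localization A M))"

definition has_quotient_field_UNIV :: "'k::field set \<Rightarrow> bool" where
  "has_quotient_field_UNIV A \<longleftrightarrow> (\<forall>x. \<exists>a\<in>A. \<exists>b\<in>A. b \<noteq> 0 \<and> x = a / b)"

definition critical :: "'k::field set \<Rightarrow> 'k set \<Rightarrow> bool" where
  "critical A M \<longleftrightarrow> maximal_ideal A M \<and>
     (\<forall>J. fg_ideal A J \<and> J \<subseteq> M \<longrightarrow> (\<exists>N\<in>max_ideals A. J \<subseteq> ideal_prod A N N))"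

definition Crit :: "'k::field set \<Rightarrow> 'k set set" where
  "Crit A = {M. critical A M}"

definition T_of :: "'k::field set \<Rightarrow> 'k set set \<Rightarrow> 'k set" where
  "T_of R C = (if C = {} then UNIV else (\<Inter>P\<in>C. localization R P))"

definition crit_step :: "'k::field set \<Rightarrow> 'k set set \<Rightarrow> 'k set set" where
  "crit_step R C = {P \<in> max_ideals R. ideal_gen (T_of R C) P \<in> Crit (T_of R C)}"

text \<open>The class of all sets Crit_alpha(R), alpha ordinal: Crit_0 = Max(R); closed under
  the successor step; closed under (nonempty) intersections (limit stages).\<close>
inductive_set crit_tower :: "'k::field set \<Rightarrow> 'k set set set" for R where
  base: "max_ideals R \<in> crit_tower R"
| succ: "C \<in> crit_tower R \<Longrightarrow> crit_step R C \<in> crit_tower R"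
| lim: "(\<And>C. C \<in> \<A> \<Longrightarrow> C \<in> crit_tower R) \<Longrightarrow> \<A> \<noteq> {} \<Longrightarrow> \<Inter>\<A> \<in> crit_tower R"

definition SP_scattered :: "'k::field set \<Rightarrow> bool" where
  "SP_scattered R \<longleftrightarrow> {} \<in> crit_tower R"

definition zariski :: "'k::field set \<Rightarrow> 'k set topology" where
  "zariski A = topology_generated_by {{P \<in> Spec A. \<not> S \<subseteq> P} | S. S \<subseteq> A}"

definition inverse_topology :: "'k::field set \<Rightarrow> 'k set topology" where
  "inverse_topology A = topology_generated_by
     {Spec A - U | U. openin (zariski A) U \<and> compactin (zariski A) U}"

definition max_space :: "'k::field set \<Rightarrow> 'k set topology" where
  "max_space A = subtopology (inverse_topology A) (max_ideals A)"

text \<open>Cantor-Bendixson derivatives: the class of all iterates, built as the least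
  family containing the space, closed under removing isolated points and under
  nonempty intersections (limit stages).\<close>
inductive_set CB_tower :: "'a topology \<Rightarrow> 'a set set" for X where
  base: "topspace X \<in> CB_tower X"
| succ: "S \<in> CB_tower X \<Longrightarrow> S \<inter> (X derived_set_of S) \<in> CB_tower X"
| lim: "(\<And>S. S \<in> \<A> \<Longrightarrow> S \<in> CB_tower X) \<Longrightarrow> \<A> \<noteq> {} \<Longrightarrow> \<Inter>\<A> \<in> CB_tower X"

definition scattered_space :: "'a topology \<Rightarrow> bool" where
  "scattered_space X \<longleftrightarrow> {} \<in> CB_tower X"

end

theory Submission
  imports Defs
begin

(*
  (b) Every Cantor-Bendixson derivative of Max(R) contains some Crit_alpha(R); the successor
  step rests on: if P is isolated in C, then P T_C is not critical. Isolation gives a finite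
  subset F of P contained in no other member of C (the basic inverse-open sets are the V(F)).
  Write a uniformizer of R_P as t / b with t in P and b outside P. If P T_C were critical,
  F and t would lie in N^2 for a maximal ideal N of T_C. If N meets R only inside P, then
  N lies in pi R_P and t in pi^2 R_P, which forces b into P. Otherwise N contains F and an
  element a outside P, and no member of C contains F and a. At each maximal ideal M of R,
  a common denominator s outside M, divided by a generator of the ideal generated by F and a
  in R_M, lies in every R_Q with Q in C, hence in T_C; this puts s into N, so N = T_C.

  (a) The perfect kernel S of Max(R) is closed. If it were nonempty and countable,
  enumerate it as s_0, s_1, ... and choose finite sets F_0, F_1, ..., increasing, each inside
  a member of S, with F_(n+1) not inside s_n. Zorn's lemma yields a prime ideal containing
  all F_n whose finite subsets all lie in members of S, i.e. lying in the closure of S in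
  the inverse topology. It is nonzero, hence maximal (the localizations are DVRs), hence in
  S; but it differs from every s_n.
*)

section \<open>Ideals of subrings of a field\<close>

lemma subringD:
  assumes "subring A"
  shows "0 \<in> A" "1 \<in> A" "x \<in> A \<Longrightarrow> y \<in> A \<Longrightarrow> x + y \<in> A"
    "x \<in> A \<Longrightarrow> y \<in> A \<Longrightarrow> x - y \<in> A" "x \<in> A \<Longrightarrow> y \<in> A \<Longrightarrow> x * y \<in> A"
  using assms unfolding subring_def by auto

lemma subring_sum:
  assumes "subring A" "finite F" "\<forall>f\<in>F. g f \<in> A"
  shows "sum g F \<in> A"
  using assms(2,3) by (induction F rule: finite_induct) (auto intro: subringD[OF assms(1)])

lemma subring_power: "subring A \<Longrightarrow> a \<in> A \<Longrightarrow> a ^ n \<in> A"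
  by (induction n) (auto intro: subringD)

lemma idealD:
  assumes "is_ideal A I"
  shows "I \<subseteq> A" "0 \<in> I" "x \<in> I \<Longrightarrow> y \<in> I \<Longrightarrow> x + y \<in> I" "a \<in> A \<Longrightarrow> x \<in> I \<Longrightarrow> a * x \<in> I"
    "a \<in> A \<Longrightarrow> x \<in> I \<Longrightarrow> x * a \<in> I"
  using assms unfolding is_ideal_def by (auto simp: mult.commute)

lemma ideal_sum:
  assumes "is_ideal A I" "finite F" "\<forall>f\<in>F. g f \<in> I"
  shows "sum g F \<in> I"
  using assms(2,3) by (induction F rule: finite_induct) (auto intro: idealD[OF assms(1)])

lemma ideal_eq_if_one_mem:
  assumes I: "is_ideal A I" and "1 \<in> I"
  shows "I = A"
  using idealD(1)[OF I] idealD(4)[OF I _ \<open>1 \<in> I\<close>] by force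

lemma is_ideal_Union_chain:
  assumes "\<C> \<noteq> {}" "\<And>X. X \<in> \<C> \<Longrightarrow> is_ideal A X" "\<And>X Y. X \<in> \<C> \<Longrightarrow> Y \<in> \<C> \<Longrightarrow> X \<subseteq> Y \<or> Y \<subseteq> X"
  shows "is_ideal A (\<Union>\<C>)"
  unfolding is_ideal_def
proof (intro conjI ballI)
  show "\<Union>\<C> \<subseteq> A" "0 \<in> \<Union>\<C>"
    using assms(1,2) idealD(1,2) by blast+
next
  fix x y assume "x \<in> \<Union>\<C>" "y \<in> \<Union>\<C>"
  then obtain X Y where XY: "X \<in> \<C>" "Y \<in> \<C>" "x \<in> X" "y \<in> Y" by blast
  then consider "X \<subseteq> Y" | "Y \<subseteq> X" using assms(3) by blast
  then show "x + y \<in> \<Union>\<C>"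
    by cases (use XY idealD(3)[OF assms(2)] in blast)+
next
  fix a x assume "a \<in> A" "x \<in> \<Union>\<C>"
  then show "a * x \<in> \<Union>\<C>" using idealD(4)[OF assms(2)] by blast
qed

lemma ideal_genI:
  "finite F \<Longrightarrow> F \<subseteq> S \<Longrightarrow> \<forall>f\<in>F. c f \<in> A \<Longrightarrow> x = (\<Sum>f\<in>F. c f * f) \<Longrightarrow> x \<in> ideal_gen A S"
  unfolding ideal_gen_def mem_Collect_eq by (intro exI[of _ F] exI[of _ c]) simp

lemma ideal_genE:
  assumes "x \<in> ideal_gen A S"
  obtains F c where "finite F" "F \<subseteq> S" "\<forall>f\<in>F. c f \<in> A" "x = (\<Sum>f\<in>F. c f * f)"
  using assms unfolding ideal_gen_def by blast

lemma ideal_gen_least: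
  assumes I: "is_ideal A I" and "S \<subseteq> I"
  shows "ideal_gen A S \<subseteq> I"
proof
  fix x assume "x \<in> ideal_gen A S"
  then obtain F c where F: "finite F" "F \<subseteq> S" "\<forall>f\<in>F. c f \<in> A" "x = (\<Sum>f\<in>F. c f * f)"
    by (rule ideal_genE)
  have "\<forall>f\<in>F. c f * f \<in> I"
    using F(2,3) idealD(4)[OF I] \<open>S \<subseteq> I\<close> by blast
  then show "x \<in> I"
    unfolding F(4) by (rule ideal_sum[OF I F(1)])
qed

lemma ideal_gen_mono: "S \<subseteq> S' \<Longrightarrow> ideal_gen A S \<subseteq> ideal_gen A S'"
  by (auto elim!: ideal_genE intro: ideal_genI)

lemma subset_ideal_gen: "1 \<in> A \<Longrightarrow> S \<subseteq> ideal_gen A S"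
proof
  fix x assume "1 \<in> A" "x \<in> S"
  then show "x \<in> ideal_gen A S" by (intro ideal_genI[of "{x}" _ "\<lambda>_. 1"]) auto
qed

lemma ideal_gen_add:
  assumes A: "subring A" and "x \<in> ideal_gen A S" "y \<in> ideal_gen A S"
  shows "x + y \<in> ideal_gen A S"
proof -
  obtain F1 c1 where 1: "finite F1" "F1 \<subseteq> S" "\<forall>f\<in>F1. c1 f \<in> A" "x = (\<Sum>f\<in>F1. c1 f * f)"
    using assms(2) by (rule ideal_genE)
  obtain F2 c2 where 2: "finite F2" "F2 \<subseteq> S" "\<forall>f\<in>F2. c2 f \<in> A" "y = (\<Sum>f\<in>F2. c2 f * f)"
    using assms(3) by (rule ideal_genE)
  define c where "c f = (if f \<in> F1 then c1 f else 0) + (if f \<in> F2 then c2 f else 0)" for f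
  have fin: "finite (F1 \<union> F2)" using 1 2 by simp
  have "x = (\<Sum>f\<in>F1 \<union> F2. if f \<in> F1 then c1 f * f else 0)"
    unfolding sum.inter_restrict[OF fin, symmetric] 1(4) by (simp add: Int_absorb1)
  moreover have "y = (\<Sum>f\<in>F1 \<union> F2. if f \<in> F2 then c2 f * f else 0)"
    unfolding sum.inter_restrict[OF fin, symmetric] 2(4) by (simp add: Int_absorb1)
  ultimately have "x + y = (\<Sum>f\<in>F1 \<union> F2. c f * f)"
    by (simp add: c_def distrib_right sum.distrib if_distrib[of "\<lambda>u. u * _"] cong: if_cong)
  moreover have "\<forall>f\<in>F1 \<union> F2. c f \<in> A"
    using 1 2 subringD(1,3)[OF A] unfolding c_def by auto
  ultimately show ?thesis
    using 1 2 by (intro ideal_genI[of "F1 \<union> F2" _ c]) auto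
qed

lemma is_ideal_ideal_gen:
  assumes A: "subring A" and S: "S \<subseteq> A"
  shows "is_ideal A (ideal_gen A S)"
  unfolding is_ideal_def
proof (intro conjI ballI)
  show "ideal_gen A S \<subseteq> A"
  proof
    fix x assume "x \<in> ideal_gen A S"
    then obtain F c where F: "finite F" "F \<subseteq> S" "\<forall>f\<in>F. c f \<in> A" "x = (\<Sum>f\<in>F. c f * f)"
      by (rule ideal_genE)
    have "\<forall>f\<in>F. c f * f \<in> A"
      using F(2,3) S subringD(5)[OF A] by blast
    then show "x \<in> A"
      unfolding F(4) by (rule subring_sum[OF A F(1)])
  qed
  show "0 \<in> ideal_gen A S"
    by (rule ideal_genI[of "{}"]) auto
next
  fix x y assume "x \<in> ideal_gen A S" "y \<in> ideal_gen A S"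
  then show "x + y \<in> ideal_gen A S" by (rule ideal_gen_add[OF A])
next
  fix a x assume a: "a \<in> A" and "x \<in> ideal_gen A S"
  then obtain F c where F: "finite F" "F \<subseteq> S" "\<forall>f\<in>F. c f \<in> A" "x = (\<Sum>f\<in>F. c f * f)"
    by (elim ideal_genE)
  then have "a * x = (\<Sum>f\<in>F. (a * c f) * f)"
    by (simp add: sum_distrib_left mult.assoc)
  then show "a * x \<in> ideal_gen A S"
    using F a subringD(5)[OF A] by (intro ideal_genI[of F _ "\<lambda>f. a * c f"]) auto
qed

lemma ideal_gen_singleton:
  assumes "0 \<in> A"
  shows "ideal_gen A {x} = {c * x | c. c \<in> A}"
proof
  show "ideal_gen A {x} \<subseteq> {c * x |c. c \<in> A}"
  proof
    fix y assume "y \<in> ideal_gen A {x}"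
    then obtain F c where F: "finite F" "F \<subseteq> {x}" "\<forall>f\<in>F. c f \<in> A" "y = (\<Sum>f\<in>F. c f * f)"
      by (rule ideal_genE)
    then consider "F = {}" | "F = {x}" by blast
    then show "y \<in> {c * x |c. c \<in> A}"
    proof cases
      case 1
      then have "y = 0 * x" using F(4) by simp
      then show ?thesis using assms by blast
    next
      case 2
      then have "y = c x * x" "c x \<in> A" using F(3,4) by auto
      then show ?thesis by blast
    qed
  qed
  show "{c * x |c. c \<in> A} \<subseteq> ideal_gen A {x}"
    by (auto intro: ideal_genI[of "{x}"])
qed

lemma ideal_prod_self_subset:
  assumes N: "is_ideal A N"
  shows "ideal_prod A N N \<subseteq> N"
  unfolding ideal_prod_def
  by (rule ideal_gen_least[OF N]) (use idealD(1,5)[OF N] in blast)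

definition ideal_adjoin :: "'k::field set \<Rightarrow> 'k set \<Rightarrow> 'k \<Rightarrow> 'k set" where
  "ideal_adjoin R J a = {j + a * r | j r. j \<in> J \<and> r \<in> R}"

lemma ideal_adjoinI: "j \<in> J \<Longrightarrow> r \<in> R \<Longrightarrow> j + a * r \<in> ideal_adjoin R J a"
  unfolding ideal_adjoin_def by blast

lemma ideal_adjoinE:
  assumes "x \<in> ideal_adjoin R J a"
  obtains j r where "j \<in> J" "r \<in> R" "x = j + a * r"
  using assms unfolding ideal_adjoin_def by blast

lemma
  assumes R: "subring R" and J: "is_ideal R J" and a: "a \<in> R"
  shows is_ideal_ideal_adjoin: "is_ideal R (ideal_adjoin R J a)"
    and ideal_adjoin_superset: "J \<subseteq> ideal_adjoin R J a"
    and mem_ideal_adjoin: "a \<in> ideal_adjoin R J a"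
proof -
  show "J \<subseteq> ideal_adjoin R J a"
  proof
    fix j assume "j \<in> J"
    then have "j + a * 0 \<in> ideal_adjoin R J a"
      using subringD(1)[OF R] by (rule ideal_adjoinI)
    then show "j \<in> ideal_adjoin R J a" by simp
  qed
  have "0 + a * 1 \<in> ideal_adjoin R J a"
    using idealD(2)[OF J] subringD(2)[OF R] by (rule ideal_adjoinI)
  then show "a \<in> ideal_adjoin R J a" by simp
  show "is_ideal R (ideal_adjoin R J a)"
    unfolding is_ideal_def
  proof (intro conjI ballI)
    show "ideal_adjoin R J a \<subseteq> R"
      using a idealD(1)[OF J] by (auto elim!: ideal_adjoinE intro!: subringD(3,5)[OF R])
    show "0 \<in> ideal_adjoin R J a"
      using \<open>J \<subseteq> ideal_adjoin R J a\<close> idealD(2)[OF J] by blast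
  next
    fix x y assume "x \<in> ideal_adjoin R J a" "y \<in> ideal_adjoin R J a"
    then obtain j1 r1 j2 r2 where jr: "j1 \<in> J" "r1 \<in> R" "x = j1 + a * r1" "j2 \<in> J" "r2 \<in> R" "y = j2 + a * r2"
      by (metis ideal_adjoinE)
    then have "x + y = (j1 + j2) + a * (r1 + r2)"
      by (simp add: algebra_simps)
    also have "\<dots> \<in> ideal_adjoin R J a"
      using jr idealD(3)[OF J] subringD(3)[OF R] by (intro ideal_adjoinI)
    finally show "x + y \<in> ideal_adjoin R J a" .
  next
    fix b x assume b: "b \<in> R" and "x \<in> ideal_adjoin R J a"
    then obtain j r where jr: "j \<in> J" "r \<in> R" "x = j + a * r"
      by (elim ideal_adjoinE)
    then have "b * x = b * j + a * (b * r)"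
      by (simp add: algebra_simps)
    also have "\<dots> \<in> ideal_adjoin R J a"
      using jr b idealD(4)[OF J] subringD(5)[OF R] by (intro ideal_adjoinI)
    finally show "b * x \<in> ideal_adjoin R J a" .
  qed
qed

lemma finite_subset_ideal_adjoin:
  assumes "finite G" "G \<subseteq> ideal_adjoin R J x"
  obtains H where "finite H" "H \<subseteq> J" "\<And>P. is_ideal R P \<Longrightarrow> H \<subseteq> P \<Longrightarrow> x \<in> P \<Longrightarrow> G \<subseteq> P"
proof -
  have "\<forall>g\<in>G. \<exists>j. \<exists>r. j \<in> J \<and> r \<in> R \<and> g = j + x * r"
    using assms(2) by (blast elim: ideal_adjoinE)
  then obtain j r where jr: "\<And>g. g \<in> G \<Longrightarrow> j g \<in> J \<and> r g \<in> R \<and> g = j g + x * r g"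
    by metis
  show thesis
  proof (rule that[of "j ` G"])
    fix P assume P: "is_ideal R P" "j ` G \<subseteq> P" "x \<in> P"
    show "G \<subseteq> P"
    proof
      fix g assume g: "g \<in> G"
      have "j g + x * r g \<in> P"
        using g jr[OF g] P idealD(3,5)[OF P(1)] by blast
      then show "g \<in> P" using jr[OF g] by simp
    qed
  qed (use assms(1) jr in auto)
qed

section \<open>Prime and maximal ideals\<close>

lemma maximal_idealD:
  assumes "maximal_ideal A M"
  shows "is_ideal A M" "1 \<notin> M"
  using assms ideal_eq_if_one_mem unfolding maximal_ideal_def by blast+

lemma prime_idealD:
  assumes "prime_ideal R P"
  shows "is_ideal R P" "P \<noteq> R" "a \<in> R \<Longrightarrow> b \<in> R \<Longrightarrow> a * b \<in> P \<Longrightarrow> a \<in> P \<or> b \<in> P"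
  using assms unfolding prime_ideal_def by auto

lemma prime_ideal_one_notin: "prime_ideal R P \<Longrightarrow> 1 \<notin> P"
  using ideal_eq_if_one_mem prime_idealD(1,2) by metis

lemma prime_ideal_subset: "prime_ideal R P \<Longrightarrow> P \<subseteq> R"
  using prime_idealD(1) idealD(1) by metis

lemma nonzero_if_notin_prime_ideal: "prime_ideal R P \<Longrightarrow> s \<notin> P \<Longrightarrow> s \<noteq> 0"
  using prime_idealD(1) idealD(2) by metis

lemma prime_ideal_mult_notin:
  "prime_ideal R P \<Longrightarrow> a \<in> R \<Longrightarrow> b \<in> R \<Longrightarrow> a \<notin> P \<Longrightarrow> b \<notin> P \<Longrightarrow> a * b \<notin> P"
  using prime_idealD(3) by metis

lemma prime_ideal_prod_notin:
  assumes R: "subring R" and P: "prime_ideal R P"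
    and "finite G" "\<forall>g\<in>G. f g \<in> R \<and> f g \<notin> P"
  shows "prod f G \<in> R \<and> prod f G \<notin> P"
  using assms(3,4)
proof (induction G rule: finite_induct)
  case empty
  then show ?case using prime_ideal_one_notin[OF P] subringD(2)[OF R] by simp
next
  case (insert x F)
  then show ?case using prime_ideal_mult_notin[OF P] subringD(5)[OF R] by simp
qed

lemma prime_ideal_power_mem:
  assumes R: "subring R" and P: "prime_ideal R P" and a: "a \<in> R"
  shows "a ^ n \<in> P \<Longrightarrow> a \<in> P"
proof (induction n)
  case 0
  then show ?case using prime_ideal_one_notin[OF P] by simp
next
  case (Suc n)
  then show ?case using prime_idealD(3)[OF P a subring_power[OF R a]] by auto
qed

lemma maximal_imp_prime_ideal:
  assumes R: "subring R" and M: "maximal_ideal R M"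
  shows "prime_ideal R M"
  unfolding prime_ideal_def
proof (intro conjI ballI impI)
  show M_ideal: "is_ideal R M" and "M \<noteq> R"
    using M unfolding maximal_ideal_def by auto
  fix a b assume a: "a \<in> R" and b: "b \<in> R" and ab: "a * b \<in> M"
  show "a \<in> M \<or> b \<in> M"
  proof (cases "a \<in> M")
    case False
    then have "ideal_adjoin R M a = R"
      using M mem_ideal_adjoin[OF R M_ideal a] is_ideal_ideal_adjoin[OF R M_ideal a]
        ideal_adjoin_superset[OF R M_ideal a]
      unfolding maximal_ideal_def by blast
    then obtain m r where mr: "m \<in> M" "r \<in> R" "1 = m + a * r"
      using subringD(2)[OF R] by (metis ideal_adjoinE)
    have "b = b * m + (a * b) * r"
      by (metis mr(3) mult.commute mult.left_commute mult_1 distrib_left)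
    also have "\<dots> \<in> M"
      using idealD(3,4,5)[OF M_ideal] b mr ab by blast
    finally show ?thesis by simp
  qed simp
qed

lemma finitary_maximal_ideal:
  assumes R: "subring R" and I: "is_ideal R I" and \<Psi>I: "\<forall>G. finite G \<and> G \<subseteq> I \<longrightarrow> \<Psi> G"
  obtains J where "is_ideal R J" "I \<subseteq> J" "\<forall>G. finite G \<and> G \<subseteq> J \<longrightarrow> \<Psi> G"
    "\<And>x. x \<in> R \<Longrightarrow> x \<notin> J \<Longrightarrow> \<exists>G. finite G \<and> G \<subseteq> ideal_adjoin R J x \<and> \<not> \<Psi> G"
proof -
  define \<A> where "\<A> = {J. is_ideal R J \<and> I \<subseteq> J \<and> (\<forall>G. finite G \<and> G \<subseteq> J \<longrightarrow> \<Psi> G)}"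
  have "\<Union>\<C> \<in> \<A>" if \<C>_ne: "\<C> \<noteq> {}" and \<C>: "subset.chain \<A> \<C>" for \<C>
  proof -
    have "is_ideal R (\<Union>\<C>)"
      using \<C> \<open>\<C> \<noteq> {}\<close> unfolding subset_chain_def \<A>_def by (intro is_ideal_Union_chain) auto
    moreover have "I \<subseteq> \<Union>\<C>"
      using \<C> \<open>\<C> \<noteq> {}\<close> unfolding subset_chain_def \<A>_def by blast
    moreover have "\<Psi> G" if G: "finite G" "G \<subseteq> \<Union>\<C>" for G
    proof -
      obtain B where "B \<in> \<C>" "G \<subseteq> B"
        using finite_subset_Union_chain[OF G \<C>_ne \<C>] .
      then show "\<Psi> G" using \<C> \<open>finite G\<close> unfolding subset_chain_def \<A>_def by blast
    qed
    ultimately show ?thesis unfolding \<A>_def by blast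
  qed
  moreover have "I \<in> \<A>" using I \<Psi>I unfolding \<A>_def by blast
  ultimately obtain J where J: "J \<in> \<A>" and J_max: "\<And>X. X \<in> \<A> \<Longrightarrow> J \<subseteq> X \<Longrightarrow> X = J"
    using subset_Zorn_nonempty[of \<A>] by blast
  show thesis
  proof (rule that)
    show "is_ideal R J" "I \<subseteq> J" "\<forall>G. finite G \<and> G \<subseteq> J \<longrightarrow> \<Psi> G"
      using J unfolding \<A>_def by auto
    fix x assume x: "x \<in> R" "x \<notin> J"
    show "\<exists>G. finite G \<and> G \<subseteq> ideal_adjoin R J x \<and> \<not> \<Psi> G"
    proof (rule ccontr)
      assume "\<nexists>G. finite G \<and> G \<subseteq> ideal_adjoin R J x \<and> \<not> \<Psi> G"
      then have "ideal_adjoin R J x \<in> \<A>"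
        using \<open>is_ideal R J\<close> \<open>I \<subseteq> J\<close> is_ideal_ideal_adjoin[OF R _ x(1)] ideal_adjoin_superset[OF R _ x(1)]
        unfolding \<A>_def by blast
      then have "ideal_adjoin R J x = J"
        using J_max ideal_adjoin_superset[OF R \<open>is_ideal R J\<close> x(1)] by blast
      then show False using mem_ideal_adjoin[OF R \<open>is_ideal R J\<close> x(1)] x(2) by blast
    qed
  qed
qed

lemma exists_maximal_ideal_superset:
  assumes R: "subring R" and I: "is_ideal R I" and "1 \<notin> I"
  shows "\<exists>M\<in>max_ideals R. I \<subseteq> M"
proof -
  obtain J where J: "is_ideal R J" "I \<subseteq> J" "\<forall>G. finite G \<and> G \<subseteq> J \<longrightarrow> 1 \<notin> G"
    and J_max: "\<And>x. x \<in> R \<Longrightarrow> x \<notin> J \<Longrightarrow> \<exists>G. finite G \<and> G \<subseteq> ideal_adjoin R J x \<and> \<not> 1 \<notin> G"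
    using finitary_maximal_ideal[OF R I, of "\<lambda>G. 1 \<notin> G"] \<open>1 \<notin> I\<close> by blast
  have "1 \<notin> J" using J(3) by blast
  have "maximal_ideal R J"
    unfolding maximal_ideal_def
  proof (intro conjI allI impI)
    show "is_ideal R J" "J \<noteq> R" using J(1) \<open>1 \<notin> J\<close> subringD(2)[OF R] by auto
    fix J' assume J': "is_ideal R J' \<and> J \<subseteq> J'"
    show "J' = J \<or> J' = R"
    proof (cases "J' \<subseteq> J")
      case False
      then obtain x where x: "x \<in> J'" "x \<notin> J" by blast
      then have "x \<in> R" using J' idealD(1) by blast
      then have "ideal_adjoin R J x \<subseteq> J'"
        using J' x by (auto elim!: ideal_adjoinE intro!: idealD(3,5)[of R J'])
      then have "1 \<in> J'" using J_max[OF \<open>x \<in> R\<close> x(2)] by blast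
      then show ?thesis using J' ideal_eq_if_one_mem by blast
    qed (use J' in blast)
  qed
  then show ?thesis using J(2) unfolding max_ideals_def by blast
qed

lemma prime_ideal_avoiding_powers:
  assumes R: "subring R" and I: "is_ideal R I" and a: "a \<in> R" and "\<forall>n. a ^ n \<notin> I"
  shows "\<exists>P. prime_ideal R P \<and> I \<subseteq> P \<and> a \<notin> P"
proof -
  let ?\<Psi> = "\<lambda>G. \<forall>n. a ^ n \<notin> G"
  obtain J where J: "is_ideal R J" "I \<subseteq> J" "\<forall>G. finite G \<and> G \<subseteq> J \<longrightarrow> ?\<Psi> G"
    and J_max: "\<And>x. x \<in> R \<Longrightarrow> x \<notin> J \<Longrightarrow> \<exists>G. finite G \<and> G \<subseteq> ideal_adjoin R J x \<and> \<not> ?\<Psi> G"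
    using finitary_maximal_ideal[OF R I, of ?\<Psi>] assms(4) by blast
  have pow_notin: "a ^ n \<notin> J" for n
    using J(3)[rule_format, of "{a ^ n}"] by auto
  have pow_in: "\<exists>n j r. j \<in> J \<and> r \<in> R \<and> a ^ n = j + x * r" if "x \<in> R" "x \<notin> J" for x
    using J_max[OF that] by (blast elim: ideal_adjoinE)
  have "prime_ideal R J"
    unfolding prime_ideal_def
  proof (intro conjI ballI impI)
    show "is_ideal R J" "J \<noteq> R"
      using J(1) pow_notin[of 0] subringD(2)[OF R] by auto
    fix x y assume xy: "x \<in> R" "y \<in> R" "x * y \<in> J"
    show "x \<in> J \<or> y \<in> J"
    proof (rule ccontr)
      assume "\<not> (x \<in> J \<or> y \<in> J)"
      then obtain n j1 r1 m j2 r2 where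
        1: "j1 \<in> J" "r1 \<in> R" "a ^ n = j1 + x * r1" and 2: "j2 \<in> J" "r2 \<in> R" "a ^ m = j2 + y * r2"
        using pow_in xy by meson
      have "a ^ (n + m) = j1 * a ^ m + j2 * (x * r1) + (x * y) * (r1 * r2)"
        unfolding power_add 1(3) 2(3) by (simp add: algebra_simps)
      also have "\<dots> \<in> J"
        using 1 2 xy subring_power[OF R a] subringD(5)[OF R] idealD(3,5)[OF J(1)] by metis
      finally show False using pow_notin by blast
    qed
  qed
  moreover have "a \<notin> J" using pow_notin[of 1] by simp
  ultimately show ?thesis using J(2) by blast
qed

text \<open>The conclusion says that \<open>J\<close> lies in the closure of \<open>\<S>\<close> in the inverse topology.\<close>
lemma exists_prime_ideal_finitely_below:
  assumes R: "subring R" and \<S>: "\<And>P. P \<in> \<S> \<Longrightarrow> prime_ideal R P"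
    and I: "is_ideal R I" and fin: "\<forall>G. finite G \<and> G \<subseteq> I \<longrightarrow> (\<exists>P\<in>\<S>. G \<subseteq> P)"
  obtains J where "prime_ideal R J" "I \<subseteq> J" "\<forall>G. finite G \<and> G \<subseteq> J \<longrightarrow> (\<exists>P\<in>\<S>. G \<subseteq> P)"
proof -
  let ?\<Psi> = "\<lambda>G. \<exists>P\<in>\<S>. G \<subseteq> P"
  obtain J where J: "is_ideal R J" "I \<subseteq> J" "\<forall>G. finite G \<and> G \<subseteq> J \<longrightarrow> ?\<Psi> G"
    and J_max: "\<And>x. x \<in> R \<Longrightarrow> x \<notin> J \<Longrightarrow> \<exists>G. finite G \<and> G \<subseteq> ideal_adjoin R J x \<and> \<not> ?\<Psi> G"
    using finitary_maximal_ideal[OF R I fin] by blast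
  have "1 \<notin> J"
    using J(3)[rule_format, of "{1}"] \<S> prime_ideal_one_notin by force
  have "prime_ideal R J"
    unfolding prime_ideal_def
  proof (intro conjI ballI impI)
    show "is_ideal R J" "J \<noteq> R"
      using J(1) \<open>1 \<notin> J\<close> subringD(2)[OF R] by auto
    fix x y assume xy: "x \<in> R" "y \<in> R" "x * y \<in> J"
    show "x \<in> J \<or> y \<in> J"
    proof (rule ccontr)
      assume "\<not> (x \<in> J \<or> y \<in> J)"
      then obtain Gx Gy where
        Gx: "finite Gx" "Gx \<subseteq> ideal_adjoin R J x" "\<not> ?\<Psi> Gx" and
        Gy: "finite Gy" "Gy \<subseteq> ideal_adjoin R J y" "\<not> ?\<Psi> Gy"
        using J_max xy by meson
      obtain Hx where Hx: "finite Hx" "Hx \<subseteq> J" "\<And>P. is_ideal R P \<Longrightarrow> Hx \<subseteq> P \<Longrightarrow> x \<in> P \<Longrightarrow> Gx \<subseteq> P"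
        using finite_subset_ideal_adjoin[OF Gx(1,2)] by blast
      obtain Hy where Hy: "finite Hy" "Hy \<subseteq> J" "\<And>P. is_ideal R P \<Longrightarrow> Hy \<subseteq> P \<Longrightarrow> y \<in> P \<Longrightarrow> Gy \<subseteq> P"
        using finite_subset_ideal_adjoin[OF Gy(1,2)] by blast
      obtain P where P: "P \<in> \<S>" "insert (x * y) (Hx \<union> Hy) \<subseteq> P"
        using J(3) Hx(1,2) Hy(1,2) xy(3) by (metis finite_Un finite_insert insert_subset le_sup_iff)
      have "x \<in> P \<or> y \<in> P"
        using prime_idealD(3)[OF \<S>[OF P(1)] xy(1,2)] P(2) by blast
      then have "Gx \<subseteq> P \<or> Gy \<subseteq> P"
        using Hx(3) Hy(3) prime_idealD(1)[OF \<S>[OF P(1)]] P(2) by blast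
      then show False using Gx(3) Gy(3) P(1) by blast
    qed
  qed
  then show thesis using that J(2,3) by blast
qed

section \<open>Localization at a prime ideal\<close>

definition localized_ideal :: "'k::field set \<Rightarrow> 'k set \<Rightarrow> 'k set \<Rightarrow> 'k set" where
  "localized_ideal R P J = {a / s | a s. a \<in> J \<and> s \<in> R \<and> s \<notin> P}"

lemma localizationI: "a \<in> R \<Longrightarrow> s \<in> R \<Longrightarrow> s \<notin> P \<Longrightarrow> a / s \<in> localization R P"
  unfolding localization_def by blast

lemma localizationE:
  assumes "x \<in> localization R P"
  obtains a s where "a \<in> R" "s \<in> R" "s \<notin> P" "x = a / s"
  using assms unfolding localization_def by blast

lemma localized_idealI: "a \<in> J \<Longrightarrow> s \<in> R \<Longrightarrow> s \<notin> P \<Longrightarrow> a / s \<in> localized_ideal R P J"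
  unfolding localized_ideal_def by blast

lemma localized_idealE:
  assumes "x \<in> localized_ideal R P J"
  obtains a s where "a \<in> J" "s \<in> R" "s \<notin> P" "x = a / s"
  using assms unfolding localized_ideal_def by blast

lemma subset_localized_ideal:
  assumes "1 \<in> R" "1 \<notin> P"
  shows "J \<subseteq> localized_ideal R P J"
proof
  fix x assume "x \<in> J"
  then have "x / 1 \<in> localized_ideal R P J" using assms by (rule localized_idealI)
  then show "x \<in> localized_ideal R P J" by simp
qed

lemma subset_localization:
  assumes R: "subring R" and P: "prime_ideal R P"
  shows "R \<subseteq> localization R P"
  using subset_localized_ideal[OF subringD(2)[OF R] prime_ideal_one_notin[OF P], of R]
  unfolding localized_ideal_def localization_def by blast

lemma is_ideal_localized_ideal:
  assumes R: "subring R" and P: "prime_ideal R P" and J: "is_ideal R J"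
  shows "is_ideal (localization R P) (localized_ideal R P J)"
  unfolding is_ideal_def
proof (intro conjI ballI)
  show "localized_ideal R P J \<subseteq> localization R P"
    using idealD(1)[OF J] by (auto elim!: localized_idealE intro!: localizationI)
  have "0 / 1 \<in> localized_ideal R P J"
    using idealD(2)[OF J] subringD(2)[OF R] prime_ideal_one_notin[OF P] by (rule localized_idealI)
  then show "0 \<in> localized_ideal R P J" by simp
next
  fix x y assume "x \<in> localized_ideal R P J" "y \<in> localized_ideal R P J"
  then obtain a s b t where ab: "a \<in> J" "b \<in> J" and st: "s \<in> R" "s \<notin> P" "t \<in> R" "t \<notin> P"
    and xy: "x = a / s" "y = b / t"
    by (elim localized_idealE) blast
  have "x + y = (a * t + b * s) / (s * t)"
    using xy nonzero_if_notin_prime_ideal[OF P] st by (simp add: add_frac_eq)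
  also have "\<dots> \<in> localized_ideal R P J"
    using ab st idealD(3,5)[OF J] subringD(5)[OF R] prime_ideal_mult_notin[OF P]
    by (intro localized_idealI) auto
  finally show "x + y \<in> localized_ideal R P J" .
next
  fix c x assume "c \<in> localization R P" "x \<in> localized_ideal R P J"
  then obtain a s b t where "a \<in> R" "b \<in> J" and st: "s \<in> R" "s \<notin> P" "t \<in> R" "t \<notin> P"
    "c = a / s" "x = b / t"
    by (elim localizationE localized_idealE) blast
  then have "c * x = (a * b) / (s * t)" by simp
  also have "\<dots> \<in> localized_ideal R P J"
    using \<open>a \<in> R\<close> \<open>b \<in> J\<close> st idealD(4)[OF J] subringD(5)[OF R] prime_ideal_mult_notin[OF P]
    by (intro localized_idealI) auto
  finally show "c * x \<in> localized_ideal R P J" .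
qed

lemma localized_ideal_contraction:
  assumes J: "prime_ideal R J" and "J \<subseteq> P" and x: "x \<in> R" "x \<in> localized_ideal R P J"
  shows "x \<in> J"
proof -
  obtain a s where as: "a \<in> J" "s \<in> R" "s \<notin> P" "x = a / s"
    using x(2) by (rule localized_idealE)
  have "s \<notin> J" using as(3) \<open>J \<subseteq> P\<close> by blast
  then have "x * s = a" using as(4) nonzero_if_notin_prime_ideal[OF J] by simp
  then show "x \<in> J" using prime_idealD(3)[OF J x(1) as(2)] as(1) \<open>s \<notin> J\<close> by auto
qed

lemma prime_ideal_localized_ideal:
  assumes R: "subring R" and P: "prime_ideal R P" and J: "prime_ideal R J" and "J \<subseteq> P"
  shows "prime_ideal (localization R P) (localized_ideal R P J)"
  unfolding prime_ideal_def
proof (intro conjI ballI impI)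
  show ideal: "is_ideal (localization R P) (localized_ideal R P J)"
    using is_ideal_localized_ideal[OF R P prime_idealD(1)[OF J]] .
  have "1 \<notin> localized_ideal R P J"
  proof
    assume "1 \<in> localized_ideal R P J"
    then obtain a s where "a \<in> J" "s \<notin> P" "1 = a / s" by (elim localized_idealE)
    then show False using \<open>J \<subseteq> P\<close> by (cases "s = 0") auto
  qed
  then show "localized_ideal R P J \<noteq> localization R P"
    using subset_localization[OF R P] subringD(2)[OF R] by blast
  fix x y assume "x \<in> localization R P" "y \<in> localization R P" "x * y \<in> localized_ideal R P J"
  then obtain a s b t c u where abc: "a \<in> R" "b \<in> R" "c \<in> J"
    and stu: "s \<in> R" "s \<notin> P" "t \<in> R" "t \<notin> P" "u \<in> R" "u \<notin> P"
    and xy: "x = a / s" "y = b / t" "x * y = c / u"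
    by (elim localizationE localized_idealE) blast
  have nz: "s \<noteq> 0" "t \<noteq> 0" "u \<noteq> 0"
    using stu nonzero_if_notin_prime_ideal[OF P] by auto
  have "a = x * s" "b = y * t" "c = x * y * u"
    using xy nz by auto
  then have "(a * b) * u = c * (s * t)"
    by (simp add: algebra_simps)
  moreover have "c * (s * t) \<in> J"
    using abc stu idealD(5)[OF prime_idealD(1)[OF J]] subringD(5)[OF R] by blast
  moreover have "u \<notin> J" using stu \<open>J \<subseteq> P\<close> by blast
  moreover have "a * b \<in> R" using abc subringD(5)[OF R] by blast
  ultimately have "a * b \<in> J"
    using prime_idealD(3)[OF J _ stu(5)] by auto
  then have "a \<in> J \<or> b \<in> J" using prime_idealD(3)[OF J] abc by blast
  then show "x \<in> localized_ideal R P J \<or> y \<in> localized_ideal R P J"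
    using xy stu localized_idealI[of _ J] by auto
qed

lemma localization_unit:
  assumes P: "prime_ideal R P" and x: "x \<in> localization R P" "x \<notin> localized_ideal R P P"
  shows "inverse x \<in> localization R P"
proof -
  obtain a s where as: "a \<in> R" "s \<in> R" "s \<notin> P" "x = a / s"
    using x(1) by (rule localizationE)
  have "a \<notin> P" using x(2) as localized_idealI[of a P s R P] by blast
  then show ?thesis using as by (simp add: localizationI)
qed

lemma maximal_localized_ideal:
  assumes R: "subring R" and P: "prime_ideal R P"
  shows "maximal_ideal (localization R P) (localized_ideal R P P)"
  unfolding maximal_ideal_def
proof (intro conjI allI impI)
  show "is_ideal (localization R P) (localized_ideal R P P)"
    "localized_ideal R P P \<noteq> localization R P"
    using prime_ideal_localized_ideal[OF R P P] unfolding prime_ideal_def by auto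
  fix J assume J: "is_ideal (localization R P) J \<and> localized_ideal R P P \<subseteq> J"
  show "J = localized_ideal R P P \<or> J = localization R P"
  proof (cases "J \<subseteq> localized_ideal R P P")
    case False
    then obtain x where x: "x \<in> J" "x \<notin> localized_ideal R P P" by blast
    then have "x \<in> localization R P" using J idealD(1) by blast
    then have "inverse x * x \<in> J"
      using localization_unit[OF P] x J idealD(4) by blast
    moreover have "x \<noteq> 0"
      using x(2) idealD(2)[OF is_ideal_localized_ideal[OF R P prime_idealD(1)[OF P]]] by auto
    ultimately show ?thesis using J ideal_eq_if_one_mem by auto
  qed (use J in blast)
qed

section \<open>Discrete valuation rings\<close>

lemma DVR_subring: "DVR V \<Longrightarrow> subring V"
  unfolding DVR_def by blast

lemma DVR_principal:
  assumes "DVR V" "is_ideal V I"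
  shows "\<exists>q\<in>V. I = {e * q | e. e \<in> V}"
proof -
  obtain q where "q \<in> V" "I = ideal_gen V {q}"
    using assms unfolding DVR_def principal_ideal_ring_def by blast
  then show ?thesis
    using ideal_gen_singleton[OF subringD(1)[OF DVR_subring[OF assms(1)]]] by blast
qed

lemma DVR_maximal_unique: "DVR V \<Longrightarrow> maximal_ideal V m \<Longrightarrow> maximal_ideal V m' \<Longrightarrow> m' = m"
  unfolding DVR_def by blast

lemma DVR_maximal_superset:
  assumes V: "DVR V" and m: "maximal_ideal V m" and I: "is_ideal V I" "1 \<notin> I"
  shows "I \<subseteq> m"
  using exists_maximal_ideal_superset[OF DVR_subring[OF V] I] DVR_maximal_unique[OF V m]
  unfolding max_ideals_def by blast

lemma DVR_unit:
  assumes V: "DVR V" and m: "maximal_ideal V m" and x: "x \<in> V" "x \<notin> m"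
  shows "inverse x \<in> V"
proof -
  have sub: "subring V" using DVR_subring[OF V] .
  let ?I = "ideal_gen V {x}"
  have "1 \<in> ?I"
    using DVR_maximal_superset[OF V m is_ideal_ideal_gen[OF sub]] subset_ideal_gen[OF subringD(2)[OF sub]]
      x by blast
  then obtain e where "e \<in> V" "1 = e * x"
    using ideal_gen_singleton[OF subringD(1)[OF sub]] by blast
  then show ?thesis using inverse_unique[of x e] by (simp add: mult.commute)
qed

lemma DVR_dvd_unit_multiple:
  assumes V: "DVR V" and m: "maximal_ideal V m" and "e \<in> V" "e \<notin> m" "e' \<in> V"
  shows "\<exists>r\<in>V. e' * q = r * (e * q)"
proof -
  have "e \<noteq> 0" using \<open>e \<notin> m\<close> idealD(2)[OF maximal_idealD(1)[OF m]] by blast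
  then have "e' * q = (e' * inverse e) * (e * q)" by simp
  moreover have "e' * inverse e \<in> V"
    using DVR_unit[OF V m \<open>e \<in> V\<close> \<open>e \<notin> m\<close>] subringD(5)[OF DVR_subring[OF V] \<open>e' \<in> V\<close>] by blast
  ultimately show ?thesis by blast
qed

lemma DVR_dvd_total:
  assumes V: "DVR V" and x: "x \<in> V" and y: "y \<in> V"
  shows "(\<exists>r\<in>V. y = r * x) \<or> (\<exists>r\<in>V. x = r * y)"
proof -
  have sub: "subring V" using DVR_subring[OF V] .
  obtain m where m: "maximal_ideal V m" using V unfolding DVR_def by blast
  have m_ideal: "is_ideal V m" and "1 \<notin> m"
    using maximal_idealD[OF m] .
  define J where "J = ideal_gen V {x}"
  have J: "is_ideal V J" "J = {c * x | c. c \<in> V}" "x \<in> J"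
    unfolding J_def using is_ideal_ideal_gen[OF sub] x ideal_gen_singleton[OF subringD(1)[OF sub]]
      subset_ideal_gen[OF subringD(2)[OF sub]] by blast+
  obtain q where q: "ideal_adjoin V J y = {e * q | e. e \<in> V}"
    using DVR_principal[OF V is_ideal_ideal_adjoin[OF sub J(1) y]] by blast
  obtain e1 e2 where e: "e1 \<in> V" "x = e1 * q" "e2 \<in> V" "y = e2 * q"
    using q ideal_adjoin_superset[OF sub J(1) y] mem_ideal_adjoin[OF sub J(1) y] J(3) by blast
  have "q \<in> ideal_adjoin V J y"
    using q subringD(2)[OF sub] by force
  then obtain c r where cr: "c \<in> V" "r \<in> V" "q = c * x + y * r"
    using J(2) by (auto elim!: ideal_adjoinE)
  show ?thesis
  proof (cases "q = 0")
    case True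
    then show ?thesis using e subringD(1)[OF sub] by auto
  next
    case False
    have "q = c * (e1 * q) + (e2 * q) * r"
      using cr(3) unfolding e(2) e(4) .
    also have "\<dots> = (c * e1 + e2 * r) * q"
      by (simp add: algebra_simps)
    finally have "c * e1 + e2 * r = 1" using False by simp
    moreover have "c * e1 + e2 * r \<in> m" if "e1 \<in> m" "e2 \<in> m"
      using that cr(1,2) idealD(3,4,5)[OF m_ideal] by blast
    ultimately have "e1 \<notin> m \<or> e2 \<notin> m"
      using \<open>1 \<notin> m\<close> by auto
    then show ?thesis
    proof
      assume "e1 \<notin> m"
      then have "\<exists>r\<in>V. e2 * q = r * (e1 * q)" by (rule DVR_dvd_unit_multiple[OF V m e(1) _ e(3)])
      then show ?thesis unfolding e(2,4) by blast
    next
      assume "e2 \<notin> m"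
      then have "\<exists>r\<in>V. e1 * q = r * (e2 * q)" by (rule DVR_dvd_unit_multiple[OF V m e(3) _ e(1)])
      then show ?thesis unfolding e(2,4) by blast
    qed
  qed
qed

lemma DVR_common_divisor:
  assumes V: "DVR V" and "finite G" "G \<noteq> {}" "G \<subseteq> V"
  shows "\<exists>g0\<in>G. \<forall>g\<in>G. \<exists>r\<in>V. g = r * g0"
  using assms(2-4)
proof (induction G rule: finite_ne_induct)
  case (singleton x)
  then show ?case using subringD(2)[OF DVR_subring[OF V]] by force
next
  case (insert x F)
  then obtain g0 where g0: "g0 \<in> F" "\<forall>g\<in>F. \<exists>r\<in>V. g = r * g0" by auto
  consider "\<exists>r\<in>V. x = r * g0" | "\<exists>r\<in>V. g0 = r * x"
    using DVR_dvd_total[OF V] g0(1) insert.prems by blast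
  then show ?case
  proof cases
    case 1
    then show ?thesis using g0 by blast
  next
    case 2
    then obtain r where r: "r \<in> V" "g0 = r * x" by blast
    have "\<exists>r\<in>V. g = r * x" if "g \<in> insert x F" for g
    proof (cases "g = x")
      case True
      then show ?thesis using subringD(2)[OF DVR_subring[OF V]] by force
    next
      case False
      then have "g \<in> F" using that by blast
      then obtain r' where "r' \<in> V" "g = r' * g0"
        using g0(2) by blast
      then have "g = (r' * r) * x" "r' * r \<in> V"
        using r subringD(5)[OF DVR_subring[OF V]] by (auto simp: mult.assoc)
      then show ?thesis by blast
    qed
    then show ?thesis by blast
  qed
qed

lemma DVR_uniformizer:
  assumes V: "DVR V" and m: "maximal_ideal V m"
  obtains \<pi> where "\<pi> \<noteq> 0" "\<pi> \<in> m" "m = {e * \<pi> | e. e \<in> V}"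
proof -
  obtain m' where "maximal_ideal V m'" "m' \<noteq> {0}"
    using V unfolding DVR_def by blast
  then have "m \<noteq> {0}" using DVR_maximal_unique[OF V m] by blast
  obtain \<pi> where \<pi>: "m = {e * \<pi> | e. e \<in> V}"
    using DVR_principal[OF V maximal_idealD(1)[OF m]] by blast
  have "\<pi> \<noteq> 0"
  proof
    assume "\<pi> = 0"
    then have "m \<subseteq> {0}" using \<pi> by auto
    then show False using \<open>m \<noteq> {0}\<close> idealD(2)[OF maximal_idealD(1)[OF m]] by blast
  qed
  have "1 * \<pi> \<in> m" using \<pi> subringD(2)[OF DVR_subring[OF V]] by blast
  then have "\<pi> \<in> m" by (simp only: mult_1)
  show thesis by (rule that[OF \<open>\<pi> \<noteq> 0\<close> \<open>\<pi> \<in> m\<close> \<pi>])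
qed

lemma DVR_nonzero_prime_eq_maximal:
  assumes V: "DVR V" and m: "maximal_ideal V m" and p: "prime_ideal V p" and "j \<in> p" "j \<noteq> 0"
  shows "p = m"
proof -
  have sub: "subring V" using DVR_subring[OF V] .
  have m_ideal: "is_ideal V m" and "1 \<notin> m"
    using maximal_idealD[OF m] .
  have "p \<subseteq> m"
    using DVR_maximal_superset[OF V m prime_idealD(1)[OF p] prime_ideal_one_notin[OF p]] .
  obtain \<pi> where "\<pi> \<noteq> 0" "\<pi> \<in> m" and \<pi>: "m = {e * \<pi> | e. e \<in> V}"
    by (rule DVR_uniformizer[OF V m])
  obtain g where g: "p = {e * g | e. e \<in> V}"
    using DVR_principal[OF V prime_idealD(1)[OF p]] by blast
  have "g \<noteq> 0"
  proof
    assume "g = 0"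
    then have "p \<subseteq> {0}" using g by auto
    then show False using \<open>j \<in> p\<close> \<open>j \<noteq> 0\<close> by blast
  qed
  have "1 * g \<in> p" using g subringD(2)[OF sub] by blast
  then have "g \<in> p" by simp
  then obtain r where r: "r \<in> V" "g = r * \<pi>" using \<open>p \<subseteq> m\<close> \<pi> by blast
  have "\<pi> \<in> V" using \<open>\<pi> \<in> m\<close> idealD(1)[OF m_ideal] by blast
  have "r \<notin> p"
  proof
    assume "r \<in> p"
    then obtain e where "e \<in> V" and r_eq: "r = e * g" using g by blast
    have "g = (e * g) * \<pi>" using r(2) unfolding r_eq .
    then have "g = (e * \<pi>) * g" by (simp add: ac_simps)
    then have "e * \<pi> = 1" using \<open>g \<noteq> 0\<close> by simp
    moreover have "e * \<pi> \<in> m" using \<pi> \<open>e \<in> V\<close> by blast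
    ultimately show False using \<open>1 \<notin> m\<close> by simp
  qed
  then have "\<pi> \<in> p" using prime_idealD(3)[OF p r(1) \<open>\<pi> \<in> V\<close>] r(2) \<open>g \<in> p\<close> by auto
  then have "m \<subseteq> p" using \<pi> idealD(4)[OF prime_idealD(1)[OF p]] by blast
  then show ?thesis using \<open>p \<subseteq> m\<close> by blast
qed


section \<open>Almost Dedekind domains\<close>

lemma almost_Dedekind_subring: "almost_Dedekind R \<Longrightarrow> subring R"
  unfolding almost_Dedekind_def by blast

lemma max_ideals_prime: "subring R \<Longrightarrow> M \<in> max_ideals R \<Longrightarrow> prime_ideal R M"
  unfolding max_ideals_def using maximal_imp_prime_ideal by blast

lemma almost_Dedekind_DVR: "almost_Dedekind R \<Longrightarrow> M \<in> max_ideals R \<Longrightarrow> DVR (localization R M)"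
  unfolding almost_Dedekind_def by blast

lemma almost_Dedekind_uniformizer:
  assumes AD: "almost_Dedekind R" and M: "M \<in> max_ideals R"
  obtains \<pi> where "\<pi> \<noteq> 0" "\<pi> \<in> localized_ideal R M M"
    "localized_ideal R M M = {e * \<pi> | e. e \<in> localization R M}"
proof -
  have R: "subring R" using almost_Dedekind_subring[OF AD] .
  show thesis
    by (rule DVR_uniformizer[OF almost_Dedekind_DVR[OF AD M] maximal_localized_ideal[OF R max_ideals_prime[OF R M]]])
      (rule that)
qed

lemma almost_Dedekind_max_ideal_nonzero:
  assumes AD: "almost_Dedekind R" and M: "M \<in> max_ideals R"
  obtains f where "f \<in> M" "f \<noteq> 0"
proof -
  obtain \<pi> where "\<pi> \<noteq> 0" "\<pi> \<in> localized_ideal R M M"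
    and "localized_ideal R M M = {e * \<pi> | e. e \<in> localization R M}"
    by (rule almost_Dedekind_uniformizer[OF AD M])
  then obtain f b where "f \<in> M" "\<pi> = f / b"
    by (elim localized_idealE)
  then show thesis using that \<open>\<pi> \<noteq> 0\<close> by auto
qed

lemma almost_Dedekind_nonzero_prime_eq_maximal:
  assumes AD: "almost_Dedekind R" and J: "prime_ideal R J" and M: "M \<in> max_ideals R"
    and "J \<subseteq> M" "j \<in> J" "j \<noteq> 0"
  shows "J = M"
proof -
  have R: "subring R" using almost_Dedekind_subring[OF AD] .
  have M_prime: "prime_ideal R M" using max_ideals_prime[OF R M] .
  have one: "1 \<in> R" "1 \<notin> M" using subringD(2)[OF R] prime_ideal_one_notin[OF M_prime] .
  have "localized_ideal R M J = localized_ideal R M M"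
    using DVR_nonzero_prime_eq_maximal[OF almost_Dedekind_DVR[OF AD M] maximal_localized_ideal[OF R M_prime]
        prime_ideal_localized_ideal[OF R M_prime J \<open>J \<subseteq> M\<close>]]
      subset_localized_ideal[OF one] \<open>j \<in> J\<close> \<open>j \<noteq> 0\<close> by blast
  then have "M \<subseteq> J"
    using subset_localized_ideal[OF one, of M] localized_ideal_contraction[OF J \<open>J \<subseteq> M\<close>]
      prime_ideal_subset[OF M_prime] by blast
  then show ?thesis using \<open>J \<subseteq> M\<close> by blast
qed

text \<open>Here \<open>g0\<close> generates \<open>G R\<^sub>M\<close>, and \<open>s\<close> clears the denominators of the quotients \<open>g / g0\<close>.\<close>
lemma almost_Dedekind_common_denominator:
  assumes AD: "almost_Dedekind R" and M: "M \<in> max_ideals R"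
    and G: "finite G" "G \<subseteq> R" and a: "a \<in> G" "a \<noteq> 0"
  obtains g0 s where "g0 \<in> G" "g0 \<noteq> 0" "s \<in> R" "s \<notin> M" "\<forall>g\<in>G. s / g0 * g \<in> R"
proof -
  let ?V = "localization R M"
  have R: "subring R" using almost_Dedekind_subring[OF AD] .
  have P: "prime_ideal R M" using max_ideals_prime[OF R M] .
  obtain g0 where g0: "g0 \<in> G" "\<forall>g\<in>G. \<exists>r\<in>?V. g = r * g0"
    using DVR_common_divisor[OF almost_Dedekind_DVR[OF AD M] G(1)] a(1) G(2) subset_localization[OF R P]
    by blast
  have "g0 \<noteq> 0" using g0(2) a by force
  have "\<forall>g\<in>G. \<exists>b c. b \<in> R \<and> c \<in> R \<and> c \<notin> M \<and> g = (b / c) * g0"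
    using g0(2) by (metis localizationE)
  then obtain b c where bc: "\<And>g. g \<in> G \<Longrightarrow> b g \<in> R \<and> c g \<in> R \<and> c g \<notin> M \<and> g = (b g / c g) * g0"
    by metis
  define s where "s = prod c G"
  have s: "s \<in> R" "s \<notin> M"
    using prime_ideal_prod_notin[OF R P G(1), of c] bc unfolding s_def by auto
  have "s / g0 * g \<in> R" if g: "g \<in> G" for g
  proof -
    have "c g \<noteq> 0" using bc[OF g] nonzero_if_notin_prime_ideal[OF P] by blast
    have "s / g0 * g = (c g * prod c (G - {g})) / g0 * ((b g / c g) * g0)"
      unfolding s_def prod.remove[OF G(1) g] using bc[OF g] by simp
    also have "\<dots> = b g * prod c (G - {g})"
      using \<open>g0 \<noteq> 0\<close> \<open>c g \<noteq> 0\<close> by (simp add: field_simps)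
    also have "\<dots> \<in> R"
      using prime_ideal_prod_notin[OF R P, of "G - {g}" c] bc G(1) g subringD(5)[OF R] by auto
    finally show ?thesis .
  qed
  then show thesis using that g0(1) \<open>g0 \<noteq> 0\<close> s by blast
qed

section \<open>The Zariski and the inverse topology\<close>

lemma generate_topology_on_nbhd_base:
  assumes "generate_topology_on \<S> W" "x \<in> W"
    and basis: "\<And>S. S \<in> \<S> \<Longrightarrow> x \<in> S \<Longrightarrow> \<exists>B\<in>\<B>. B \<subseteq> S"
    and Int: "\<And>B1 B2. B1 \<in> \<B> \<Longrightarrow> B2 \<in> \<B> \<Longrightarrow> \<exists>B\<in>\<B>. B \<subseteq> B1 \<inter> B2"
  shows "\<exists>B\<in>\<B>. B \<subseteq> W"
  using assms(1,2)
proof (induction rule: generate_topology_on.induct)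
  case (Int a b)
  then obtain B1 B2 where "B1 \<in> \<B>" "B1 \<subseteq> a" "B2 \<in> \<B>" "B2 \<subseteq> b" by auto
  then show ?case using assms(4)[of B1 B2] by blast
next
  case (UN K)
  then obtain k where "k \<in> K" "x \<in> k" by blast
  then show ?case using UN.IH by blast
qed (use basis in auto)

definition spec_D :: "'k::field set \<Rightarrow> 'k set \<Rightarrow> 'k set set" where
  "spec_D R S = {P \<in> Spec R. \<not> S \<subseteq> P}"

definition spec_V :: "'k::field set \<Rightarrow> 'k set \<Rightarrow> 'k set set" where
  "spec_V R F = {P \<in> Spec R. F \<subseteq> P}"

lemma zariski_eq: "zariski R = topology_generated_by {spec_D R S | S. S \<subseteq> R}"
  unfolding zariski_def spec_D_def ..

lemma topspace_zariski:
  assumes R: "subring R"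
  shows "topspace (zariski R) = Spec R"
proof -
  have "spec_D R R = Spec R"
    unfolding spec_D_def Spec_def using prime_ideal_one_notin subringD(2)[OF R] by blast
  then show ?thesis unfolding zariski_eq topology_generated_by_topspace spec_D_def by blast
qed

lemma openin_zariski_spec_D: "S \<subseteq> R \<Longrightarrow> openin (zariski R) (spec_D R S)"
  unfolding zariski_eq by (rule topology_generated_by_Basis) blast

lemma spec_D_mult:
  assumes "s1 \<in> R" "s2 \<in> R"
  shows "spec_D R {s1 * s2} = spec_D R {s1} \<inter> spec_D R {s2}"
proof (intro equalityI subsetI)
  fix Q assume "Q \<in> spec_D R {s1 * s2}"
  then have Q: "prime_ideal R Q" "s1 * s2 \<notin> Q" unfolding spec_D_def Spec_def by auto
  then have "s1 \<notin> Q" "s2 \<notin> Q"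
    using idealD(4,5)[OF prime_idealD(1)[OF Q(1)]] assms by blast+
  then show "Q \<in> spec_D R {s1} \<inter> spec_D R {s2}"
    using Q(1) unfolding spec_D_def Spec_def by auto
next
  fix Q assume "Q \<in> spec_D R {s1} \<inter> spec_D R {s2}"
  then have Q: "prime_ideal R Q" "s1 \<notin> Q" "s2 \<notin> Q" unfolding spec_D_def Spec_def by auto
  then have "s1 * s2 \<notin> Q" using prime_ideal_mult_notin assms by blast
  then show "Q \<in> spec_D R {s1 * s2}" using Q(1) unfolding spec_D_def Spec_def by auto
qed

lemma zariski_open_nbhd:
  assumes R: "subring R" and W: "openin (zariski R) W" and P: "P \<in> W"
  shows "\<exists>s\<in>R. s \<notin> P \<and> spec_D R {s} \<subseteq> W"
proof -
  let ?\<B> = "{spec_D R {s} | s. s \<in> R \<and> s \<notin> P}"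
  have "prime_ideal R P"
    using openin_subset[OF W] P topspace_zariski[OF R] unfolding Spec_def by blast
  have "\<exists>B\<in>?\<B>. B \<subseteq> W"
  proof (rule generate_topology_on_nbhd_base[of _ W])
    show "generate_topology_on {spec_D R S | S. S \<subseteq> R} W"
      using W unfolding zariski_eq by (rule openin_topology_generated_by)
  next
    fix S assume "S \<in> {spec_D R S | S. S \<subseteq> R}" "P \<in> S"
    then obtain T where T: "S = spec_D R T" "T \<subseteq> R" by blast
    then obtain t where t: "t \<in> T" "t \<notin> P" using \<open>P \<in> S\<close> unfolding spec_D_def by blast
    have "spec_D R {t} \<subseteq> S" using t(1) unfolding T(1) spec_D_def by blast
    then show "\<exists>B\<in>?\<B>. B \<subseteq> S" using t T(2) by blast
  next
    fix B1 B2 assume "B1 \<in> ?\<B>" "B2 \<in> ?\<B>"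
    then obtain s1 s2 where s: "B1 = spec_D R {s1}" "B2 = spec_D R {s2}" "s1 \<in> R" "s2 \<in> R" "s1 \<notin> P" "s2 \<notin> P"
      by blast
    then have "spec_D R {s1 * s2} = B1 \<inter> B2" using spec_D_mult by blast
    moreover have "s1 * s2 \<in> R" "s1 * s2 \<notin> P"
      using s subringD(5)[OF R] prime_ideal_mult_notin[OF \<open>prime_ideal R P\<close>] by auto
    ultimately show "\<exists>B\<in>?\<B>. B \<subseteq> B1 \<inter> B2" by blast
  qed (use P in simp)
  then show ?thesis by blast
qed

lemma zariski_open_generalization:
  assumes R: "subring R" and W: "openin (zariski R) W" and "Q \<in> W" "P \<in> Spec R" "P \<subseteq> Q"
  shows "P \<in> W"
  using zariski_open_nbhd[OF R W \<open>Q \<in> W\<close>] assms(4,5) unfolding spec_D_def by blast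

lemma spec_D_subset_if_power_mem:
  assumes R: "subring R" and a: "a \<in> R" and "a ^ n \<in> ideal_gen R G"
  obtains F where "finite F" "F \<subseteq> G" "spec_D R {a} \<subseteq> (\<Union>g\<in>F. spec_D R {g})"
proof -
  obtain F c where F: "finite F" "F \<subseteq> G" "\<forall>g\<in>F. c g \<in> R" "a ^ n = (\<Sum>g\<in>F. c g * g)"
    using assms(3) by (rule ideal_genE)
  have "Q \<in> (\<Union>g\<in>F. spec_D R {g})" if Q: "Q \<in> spec_D R {a}" for Q
  proof -
    have Q_ideal: "is_ideal R Q" and Q_prime: "prime_ideal R Q" and "a \<notin> Q"
      using Q prime_idealD(1) unfolding spec_D_def Spec_def by auto
    have "\<not> F \<subseteq> Q"
    proof
      assume "F \<subseteq> Q"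
      then have "\<forall>g\<in>F. c g * g \<in> Q" using idealD(4)[OF Q_ideal] F(3) by blast
      then have "a ^ n \<in> Q" unfolding F(4) by (rule ideal_sum[OF Q_ideal F(1)])
      then show False using prime_ideal_power_mem[OF R Q_prime a] \<open>a \<notin> Q\<close> by blast
    qed
    then show ?thesis using Q unfolding spec_D_def by blast
  qed
  then show thesis using that F(1,2) by blast
qed

lemma compactin_zariski_spec_D:
  assumes R: "subring R" and a: "a \<in> R"
  shows "compactin (zariski R) (spec_D R {a})"
  unfolding compactin_def
proof (intro conjI allI impI)
  show "spec_D R {a} \<subseteq> topspace (zariski R)"
    unfolding topspace_zariski[OF R] spec_D_def by blast
  fix \<U> assume \<U>: "(\<forall>U\<in>\<U>. openin (zariski R) U) \<and> spec_D R {a} \<subseteq> \<Union>\<U>"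
  have choice: "\<forall>P\<in>spec_D R {a}. \<exists>s. s \<in> R \<and> s \<notin> P \<and> (\<exists>U\<in>\<U>. spec_D R {s} \<subseteq> U)"
  proof
    fix P assume "P \<in> spec_D R {a}"
    then obtain U where U: "U \<in> \<U>" "P \<in> U" using \<U> by blast
    then have "openin (zariski R) U" using \<U> by blast
    then obtain s where "s \<in> R" "s \<notin> P" "spec_D R {s} \<subseteq> U"
      using zariski_open_nbhd[OF R _ U(2)] by blast
    then show "\<exists>s. s \<in> R \<and> s \<notin> P \<and> (\<exists>U\<in>\<U>. spec_D R {s} \<subseteq> U)"
      using U(1) by blast
  qed
  from bchoice[OF choice] obtain f
    where f: "\<forall>P\<in>spec_D R {a}. f P \<in> R \<and> f P \<notin> P \<and> (\<exists>U\<in>\<U>. spec_D R {f P} \<subseteq> U)" ..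
  define I where "I = ideal_gen R (f ` spec_D R {a})"
  have I: "is_ideal R I"
    unfolding I_def using f by (intro is_ideal_ideal_gen[OF R]) blast
  have "\<exists>n. a ^ n \<in> I"
  proof (rule ccontr)
    assume "\<nexists>n. a ^ n \<in> I"
    then obtain P where P: "prime_ideal R P" "I \<subseteq> P" "a \<notin> P"
      using prime_ideal_avoiding_powers[OF R I a] by blast
    then have "P \<in> spec_D R {a}" unfolding spec_D_def Spec_def by blast
    moreover have "f ` spec_D R {a} \<subseteq> P"
      using subset_ideal_gen[OF subringD(2)[OF R]] P(2) unfolding I_def by blast
    ultimately show False using f by blast
  qed
  then obtain n where "a ^ n \<in> ideal_gen R (f ` spec_D R {a})" unfolding I_def by blast
  then obtain F where F: "finite F" "F \<subseteq> f ` spec_D R {a}" "spec_D R {a} \<subseteq> (\<Union>g\<in>F. spec_D R {g})"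
    by (rule spec_D_subset_if_power_mem[OF R a])
  have "\<forall>g\<in>F. \<exists>U. U \<in> \<U> \<and> spec_D R {g} \<subseteq> U" using F(2) f by blast
  from bchoice[OF this] obtain U where U: "\<forall>g\<in>F. U g \<in> \<U> \<and> spec_D R {g} \<subseteq> U g" ..
  show "\<exists>\<F>. finite \<F> \<and> \<F> \<subseteq> \<U> \<and> spec_D R {a} \<subseteq> \<Union>\<F>"
  proof (intro exI conjI)
    show "finite (U ` F)" "U ` F \<subseteq> \<U>" using F(1) U by auto
    show "spec_D R {a} \<subseteq> \<Union>(U ` F)" using F(3) U by blast
  qed
qed

lemma inverse_topology_eq:
  "inverse_topology R = topology_generated_by {Spec R - U | U. openin (zariski R) U \<and> compactin (zariski R) U}"
  unfolding inverse_topology_def ..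

lemma topspace_inverse_topology: "topspace (inverse_topology R) = Spec R"
proof -
  have "Spec R \<in> {Spec R - U | U. openin (zariski R) U \<and> compactin (zariski R) U}"
    by (rule CollectI, rule exI[of _ "{}"]) simp
  then show ?thesis unfolding inverse_topology_eq topology_generated_by_topspace by blast
qed

lemma openin_inverse_topology_spec_V:
  assumes R: "subring R" and "finite F" "F \<subseteq> R"
  shows "openin (inverse_topology R) (spec_V R F)"
  using assms(2,3)
proof (induction F rule: finite_induct)
  case empty
  have "spec_V R {} = topspace (inverse_topology R)"
    unfolding topspace_inverse_topology spec_V_def by blast
  then show ?case by simp
next
  case (insert x F)
  have "spec_V R {x} = Spec R - spec_D R {x}" unfolding spec_V_def spec_D_def by blast
  moreover have "openin (zariski R) (spec_D R {x})" "compactin (zariski R) (spec_D R {x})"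
    using insert.prems openin_zariski_spec_D[of "{x}" R] compactin_zariski_spec_D[OF R] by auto
  ultimately have "openin (inverse_topology R) (spec_V R {x})"
    unfolding inverse_topology_eq by (intro topology_generated_by_Basis) blast
  moreover have "spec_V R (insert x F) = spec_V R {x} \<inter> spec_V R F" unfolding spec_V_def by blast
  ultimately show ?case using insert by auto
qed

lemma compact_open_avoiding_prime:
  assumes R: "subring R" and U: "openin (zariski R) U" "compactin (zariski R) U"
    and P: "P \<in> Spec R" "P \<notin> U"
  obtains F where "finite F" "F \<subseteq> P" "spec_V R F \<inter> U = {}"
proof -
  have cover: "U \<subseteq> (\<Union>t\<in>P. spec_D R {t})"
  proof
    fix Q assume "Q \<in> U"
    then have "\<not> P \<subseteq> Q" using zariski_open_generalization[OF R U(1) _ P(1)] P(2) by blast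
    moreover have "Q \<in> Spec R" using openin_subset[OF U(1)] \<open>Q \<in> U\<close> topspace_zariski[OF R] by blast
    ultimately show "Q \<in> (\<Union>t\<in>P. spec_D R {t})" unfolding spec_D_def by blast
  qed
  have "openin (zariski R) (spec_D R {t})" if "t \<in> P" for t
    using openin_zariski_spec_D[of "{t}" R] that prime_ideal_subset[of R P] P(1) unfolding Spec_def by blast
  then have "\<forall>W\<in>(\<lambda>t. spec_D R {t}) ` P. openin (zariski R) W" by blast
  moreover have "\<And>\<U>. \<forall>W\<in>\<U>. openin (zariski R) W \<Longrightarrow> U \<subseteq> \<Union>\<U> \<Longrightarrow> \<exists>\<F>. finite \<F> \<and> \<F> \<subseteq> \<U> \<and> U \<subseteq> \<Union>\<F>"
    using U(2) unfolding compactin_def by blast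
  ultimately obtain \<F> where \<F>: "finite \<F>" "\<F> \<subseteq> (\<lambda>t. spec_D R {t}) ` P" "U \<subseteq> \<Union>\<F>"
    using cover by meson
  obtain F where "F \<subseteq> P" "finite F" "\<F> = (\<lambda>t. spec_D R {t}) ` F"
    using finite_subset_image[OF \<F>(1,2)] by blast
  moreover have "spec_V R F \<inter> (\<Union>t\<in>F. spec_D R {t}) = {}"
    unfolding spec_V_def spec_D_def by blast
  ultimately show thesis using that \<F>(3) by blast
qed

lemma inverse_topology_open_nbhd:
  assumes R: "subring R" and W: "openin (inverse_topology R) W" and P: "P \<in> W"
  shows "\<exists>F. finite F \<and> F \<subseteq> P \<and> spec_V R F \<subseteq> W"
proof -
  let ?\<B> = "{spec_V R F | F. finite F \<and> F \<subseteq> P}"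
  have "\<exists>B\<in>?\<B>. B \<subseteq> W"
  proof (rule generate_topology_on_nbhd_base[OF _ P])
    show "generate_topology_on {Spec R - U | U. openin (zariski R) U \<and> compactin (zariski R) U} W"
      using W unfolding inverse_topology_eq by (rule openin_topology_generated_by)
  next
    fix S assume "S \<in> {Spec R - U | U. openin (zariski R) U \<and> compactin (zariski R) U}" "P \<in> S"
    then obtain U where U: "openin (zariski R) U" "compactin (zariski R) U" "S = Spec R - U"
      by blast
    have "P \<in> Spec R" "P \<notin> U" using \<open>P \<in> S\<close> U(3) by auto
    then obtain F where F: "finite F" "F \<subseteq> P" "spec_V R F \<inter> U = {}"
      by (rule compact_open_avoiding_prime[OF R U(1,2)])
    have "spec_V R F \<subseteq> S" using F(3) unfolding U(3) spec_V_def by blast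
    then show "\<exists>B\<in>?\<B>. B \<subseteq> S" using F(1,2) by blast
  next
    fix B1 B2 assume "B1 \<in> ?\<B>" "B2 \<in> ?\<B>"
    then obtain F1 F2 where F: "B1 = spec_V R F1" "B2 = spec_V R F2"
      "finite F1" "F1 \<subseteq> P" "finite F2" "F2 \<subseteq> P"
      by blast
    have "spec_V R (F1 \<union> F2) \<subseteq> B1 \<inter> B2" unfolding F(1,2) spec_V_def by blast
    moreover have "finite (F1 \<union> F2)" "F1 \<union> F2 \<subseteq> P" using F(3-6) by auto
    ultimately show "\<exists>B\<in>?\<B>. B \<subseteq> B1 \<inter> B2" by blast
  qed
  then show ?thesis by blast
qed

lemma maximal_ideal_not_subset:
  "maximal_ideal R M \<Longrightarrow> maximal_ideal R N \<Longrightarrow> M \<noteq> N \<Longrightarrow> \<not> M \<subseteq> N"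
  unfolding maximal_ideal_def by blast

lemma max_ideals_subset_Spec: "subring R \<Longrightarrow> max_ideals R \<subseteq> Spec R"
  using max_ideals_prime unfolding Spec_def by blast

lemma topspace_max_space: "subring R \<Longrightarrow> topspace (max_space R) = max_ideals R"
  unfolding max_space_def topspace_subtopology topspace_inverse_topology
  using max_ideals_subset_Spec by blast

lemma openin_max_space_spec_V:
  assumes "subring R" "finite F" "F \<subseteq> R"
  shows "openin (max_space R) (spec_V R F \<inter> max_ideals R)"
  unfolding max_space_def openin_subtopology
  using openin_inverse_topology_spec_V[OF assms] by blast

lemma max_space_open_nbhd:
  assumes R: "subring R" and U: "openin (max_space R) U" and P: "P \<in> U"
  shows "\<exists>F. finite F \<and> F \<subseteq> P \<and> spec_V R F \<inter> max_ideals R \<subseteq> U"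
proof -
  obtain W where W: "openin (inverse_topology R) W" "U = W \<inter> max_ideals R"
    using U unfolding max_space_def openin_subtopology by blast
  then have "P \<in> W" using P by blast
  then obtain F where "finite F" "F \<subseteq> P" "spec_V R F \<subseteq> W"
    using inverse_topology_open_nbhd[OF R W(1)] by blast
  then show ?thesis unfolding W(2) by blast
qed

lemma t1_space_max_space:
  assumes R: "subring R"
  shows "t1_space (max_space R)"
  unfolding t1_space_def topspace_max_space[OF R]
proof (intro ballI impI)
  fix M N assume M: "M \<in> max_ideals R" and N: "N \<in> max_ideals R" and "M \<noteq> N"
  then have "\<not> M \<subseteq> N" using maximal_ideal_not_subset unfolding max_ideals_def by blast
  then obtain a where a: "a \<in> M" "a \<notin> N" by blast
  have "M \<subseteq> R" using maximal_idealD(1) idealD(1) M unfolding max_ideals_def by blast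
  then have "openin (max_space R) (spec_V R {a} \<inter> max_ideals R)"
    using openin_max_space_spec_V[OF R, of "{a}"] a(1) by auto
  moreover have "M \<in> spec_V R {a} \<inter> max_ideals R" "N \<notin> spec_V R {a} \<inter> max_ideals R"
    using a M max_ideals_subset_Spec[OF R] unfolding spec_V_def by auto
  ultimately show "\<exists>U. openin (max_space R) U \<and> M \<in> U \<and> N \<notin> U" by blast
qed

section \<open>Scattered maximal spaces are SP-scattered\<close>

lemma T_of_subset_localization: "P \<in> C \<Longrightarrow> T_of R C \<subseteq> localization R P"
  unfolding T_of_def by auto

lemma subset_T_of:
  assumes R: "subring R" and C: "C \<subseteq> max_ideals R"
  shows "R \<subseteq> T_of R C"
  using subset_localization[OF R max_ideals_prime[OF R]] C unfolding T_of_def by auto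

lemma ideal_gen_mono_ring: "A \<subseteq> B \<Longrightarrow> ideal_gen A S \<subseteq> ideal_gen B S"
  unfolding ideal_gen_def by blast

lemma is_ideal_contraction_T_of:
  assumes R: "subring R" and C: "C \<subseteq> max_ideals R" and N: "is_ideal (T_of R C) N"
  shows "is_ideal R (N \<inter> R)"
  unfolding is_ideal_def
  using idealD[OF N] subringD[OF R] subset_T_of[OF R C] by auto

lemma one_mem_ideal_T_of:
  assumes AD: "almost_Dedekind R" and C: "C \<subseteq> max_ideals R" and N: "is_ideal (T_of R C) N"
    and G: "finite G" "G \<subseteq> N \<inter> R" "a \<in> G" "a \<noteq> 0" and avoid: "\<forall>Q\<in>C. \<not> G \<subseteq> Q"
  shows "1 \<in> N"
proof (rule ccontr)
  assume "1 \<notin> N"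
  have R: "subring R" using almost_Dedekind_subring[OF AD] .
  obtain M where M: "M \<in> max_ideals R" "N \<inter> R \<subseteq> M"
    using exists_maximal_ideal_superset[OF R is_ideal_contraction_T_of[OF R C N]] \<open>1 \<notin> N\<close> by blast
  obtain g0 s where gs: "g0 \<in> G" "g0 \<noteq> 0" "s \<in> R" "s \<notin> M" "\<forall>g\<in>G. s / g0 * g \<in> R"
    using almost_Dedekind_common_denominator[OF AD M(1) G(1)] G(2-4) by blast
  have "s / g0 \<in> localization R Q" if "Q \<in> C" for Q
  proof -
    obtain g where g: "g \<in> G" "g \<notin> Q" using avoid \<open>Q \<in> C\<close> by blast
    have "g \<noteq> 0"
      using nonzero_if_notin_prime_ideal[OF max_ideals_prime[OF R] g(2)] C \<open>Q \<in> C\<close> by blast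
    have "(s / g0 * g) / g \<in> localization R Q"
      using gs(5) g G(2) by (intro localizationI) auto
    then show ?thesis using \<open>g \<noteq> 0\<close> by simp
  qed
  then have "s / g0 \<in> T_of R C" unfolding T_of_def by auto
  then have "s / g0 * g0 \<in> N" using idealD(4)[OF N] gs(1) G(2) by blast
  then show False using gs(2-4) M(2) by auto
qed

lemma T_of_ideal_subset_localized_ideal:
  assumes R: "subring R" and C: "C \<subseteq> max_ideals R" and "P \<in> C"
    and N: "is_ideal (T_of R C) N" and "N \<inter> R \<subseteq> P"
  shows "N \<subseteq> localized_ideal R P P"
proof
  fix n assume "n \<in> N"
  then have "n \<in> localization R P"
    using idealD(1)[OF N] T_of_subset_localization[OF \<open>P \<in> C\<close>] by blast
  then obtain a d where ad: "a \<in> R" "d \<in> R" "d \<notin> P" "n = a / d" by (rule localizationE)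
  have "d \<noteq> 0"
    using nonzero_if_notin_prime_ideal[OF max_ideals_prime[OF R] ad(3)] C \<open>P \<in> C\<close> by blast
  have "n * d \<in> N" using idealD(5)[OF N _ \<open>n \<in> N\<close>] ad(2) subset_T_of[OF R C] by blast
  then have "a \<in> P" using ad \<open>d \<noteq> 0\<close> \<open>N \<inter> R \<subseteq> P\<close> by auto
  then show "n \<in> localized_ideal R P P" using ad by (simp add: localized_idealI)
qed

lemma ideal_prod_subset_principal_square:
  assumes V: "subring V" and "T \<subseteq> V" and "\<pi> \<in> V" and N: "N \<subseteq> {e * \<pi> | e. e \<in> V}"
  shows "ideal_prod T N N \<subseteq> {e * \<pi>\<^sup>2 | e. e \<in> V}"
proof -
  have I: "is_ideal V {e * \<pi>\<^sup>2 | e. e \<in> V}"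
    using is_ideal_ideal_gen[OF V, of "{\<pi>\<^sup>2}"] ideal_gen_singleton[OF subringD(1)[OF V]]
      subring_power[OF V \<open>\<pi> \<in> V\<close>] by auto
  have "{i * j | i j. i \<in> N \<and> j \<in> N} \<subseteq> {e * \<pi>\<^sup>2 | e. e \<in> V}"
  proof
    fix x assume "x \<in> {i * j | i j. i \<in> N \<and> j \<in> N}"
    then obtain e1 e2 where "x = (e1 * \<pi>) * (e2 * \<pi>)" "e1 \<in> V" "e2 \<in> V" using N by blast
    then have "x = (e1 * e2) * \<pi>\<^sup>2" "e1 * e2 \<in> V"
      using subringD(5)[OF V] by (auto simp: power2_eq_square ac_simps)
    then show "x \<in> {e * \<pi>\<^sup>2 | e. e \<in> V}" by blast
  qed
  then show ?thesis
    unfolding ideal_prod_def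
    using ideal_gen_mono_ring[OF \<open>T \<subseteq> V\<close>] ideal_gen_least[OF I] by blast
qed

lemma uniformizer_numerator_notin_square:
  assumes AD: "almost_Dedekind R" and C: "C \<subseteq> max_ideals R" and "P \<in> C"
    and N: "is_ideal (T_of R C) N" "N \<inter> R \<subseteq> P"
    and \<pi>: "localized_ideal R P P = {e * \<pi> | e. e \<in> localization R P}" "\<pi> \<noteq> 0"
    and tb: "\<pi> = t / b" "b \<in> R" "b \<notin> P"
  shows "t \<notin> ideal_prod (T_of R C) N N"
proof
  assume t: "t \<in> ideal_prod (T_of R C) N N"
  let ?V = "localization R P"
  have R: "subring R" using almost_Dedekind_subring[OF AD] .
  have PM: "P \<in> max_ideals R" using \<open>P \<in> C\<close> C by blast
  have P_prime: "prime_ideal R P" using max_ideals_prime[OF R PM] .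
  have V: "subring ?V" using DVR_subring[OF almost_Dedekind_DVR[OF AD PM]] .
  have "1 * \<pi> \<in> localized_ideal R P P" using \<pi>(1) subringD(2)[OF V] by blast
  then have "\<pi> \<in> ?V"
    using is_ideal_localized_ideal[OF R P_prime prime_idealD(1)[OF P_prime]] idealD(1) by auto
  have "N \<subseteq> {e * \<pi> | e. e \<in> ?V}"
    using T_of_ideal_subset_localized_ideal[OF R C \<open>P \<in> C\<close> N] \<pi>(1) by simp
  then obtain z where "z \<in> ?V" "t = z * \<pi>\<^sup>2"
    using ideal_prod_subset_principal_square[OF V T_of_subset_localization[OF \<open>P \<in> C\<close>] \<open>\<pi> \<in> ?V\<close>] t
    by blast
  moreover have "t = \<pi> * b"
    using tb(1) nonzero_if_notin_prime_ideal[OF P_prime tb(3)] by simp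
  ultimately have "b = z * \<pi>" using \<pi>(2) by (simp add: power2_eq_square)
  then have "b \<in> localized_ideal R P P" using \<pi>(1) \<open>z \<in> ?V\<close> by blast
  then show False using localized_ideal_contraction[OF P_prime subset_refl tb(2)] tb(3) by blast
qed

lemma not_critical_if_separated:
  assumes AD: "almost_Dedekind R" and C: "C \<subseteq> max_ideals R" and "P \<in> C"
    and F: "finite F" "F \<subseteq> P" and sep: "\<forall>Q\<in>C. F \<subseteq> Q \<longrightarrow> Q = P"
  shows "ideal_gen (T_of R C) P \<notin> Crit (T_of R C)"
proof
  assume crit: "ideal_gen (T_of R C) P \<in> Crit (T_of R C)"
  let ?T = "T_of R C"
  have R: "subring R" using almost_Dedekind_subring[OF AD] .
  have PM: "P \<in> max_ideals R" using \<open>P \<in> C\<close> C by blast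
  have P_prime: "prime_ideal R P" using max_ideals_prime[OF R PM] .
  have RT: "R \<subseteq> ?T" using subset_T_of[OF R C] .
  obtain \<pi> where \<pi>: "\<pi> \<noteq> 0" "\<pi> \<in> localized_ideal R P P"
    "localized_ideal R P P = {e * \<pi> | e. e \<in> localization R P}"
    by (rule almost_Dedekind_uniformizer[OF AD PM])
  from \<pi>(2) obtain t b where tb: "t \<in> P" "b \<in> R" "b \<notin> P" "\<pi> = t / b"
    by (rule localized_idealE)
  have G: "finite (insert t F)" "insert t F \<subseteq> P" using F tb(1) by auto
  have "fg_ideal ?T (ideal_gen ?T (insert t F))"
    unfolding fg_ideal_def using G prime_ideal_subset[OF P_prime] RT by blast
  moreover have "ideal_gen ?T (insert t F) \<subseteq> ideal_gen ?T P"
    using ideal_gen_mono[OF G(2)] .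
  ultimately obtain N where N: "maximal_ideal ?T N" "ideal_gen ?T (insert t F) \<subseteq> ideal_prod ?T N N"
    using crit unfolding Crit_def critical_def max_ideals_def by blast
  have N_ideal: "is_ideal ?T N" and "1 \<notin> N" using maximal_idealD[OF N(1)] .
  have GN2: "insert t F \<subseteq> ideal_prod ?T N N"
    using N(2) subset_ideal_gen[of ?T] RT subringD(2)[OF R] by blast
  then have GN: "insert t F \<subseteq> N" using ideal_prod_self_subset[OF N_ideal] by blast
  show False
  proof (cases "N \<inter> R \<subseteq> P")
    case True
    then show False
      using uniformizer_numerator_notin_square[OF AD C \<open>P \<in> C\<close> N_ideal True \<pi>(3,1) tb(4,2,3)] GN2
      by blast
  next
    case False
    then obtain a where a: "a \<in> N" "a \<in> R" "a \<notin> P" by blast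
    have "\<forall>Q\<in>C. \<not> insert a F \<subseteq> Q" using sep a(3) by blast
    moreover have "a \<noteq> 0" using nonzero_if_notin_prime_ideal[OF P_prime a(3)] .
    moreover have "insert a F \<subseteq> N \<inter> R" using a GN F(2) prime_ideal_subset[OF P_prime] by blast
    ultimately have "1 \<in> N" using one_mem_ideal_T_of[OF AD C N_ideal, of "insert a F" a] F(1) by blast
    then show False using \<open>1 \<notin> N\<close> by blast
  qed
qed

lemma isolated_not_critical:
  assumes AD: "almost_Dedekind R" and C: "C \<subseteq> max_ideals R" and "P \<in> C"
    and isolated: "P \<notin> max_space R derived_set_of C"
  shows "ideal_gen (T_of R C) P \<notin> Crit (T_of R C)"
proof -
  have R: "subring R" using almost_Dedekind_subring[OF AD] .
  have "P \<in> topspace (max_space R)" using \<open>P \<in> C\<close> C topspace_max_space[OF R] by blast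
  then obtain U where U: "openin (max_space R) U" "P \<in> U" "\<forall>Q. Q \<noteq> P \<longrightarrow> Q \<in> C \<longrightarrow> Q \<notin> U"
    using isolated unfolding derived_set_of_def by blast
  obtain F where F: "finite F" "F \<subseteq> P" "spec_V R F \<inter> max_ideals R \<subseteq> U"
    using max_space_open_nbhd[OF R U(1,2)] by blast
  have "\<forall>Q\<in>C. F \<subseteq> Q \<longrightarrow> Q = P"
    using F(3) U(3) C max_ideals_subset_Spec[OF R] unfolding spec_V_def by blast
  then show ?thesis using not_critical_if_separated[OF AD C \<open>P \<in> C\<close> F(1,2)] by blast
qed

lemma crit_tower_subset: "C \<in> crit_tower R \<Longrightarrow> C \<subseteq> max_ideals R"
  by (induction rule: crit_tower.induct) (auto simp: crit_step_def)

lemma crit_tower_refines_CB_tower: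
  assumes AD: "almost_Dedekind R" and "S \<in> CB_tower (max_space R)"
  shows "\<exists>C\<in>crit_tower R. C \<subseteq> S"
  using assms(2)
proof (induction rule: CB_tower.induct)
  case base
  show ?case
    using crit_tower.base topspace_max_space[OF almost_Dedekind_subring[OF AD]] by auto
next
  case (succ S)
  then obtain C where C: "C \<in> crit_tower R" "C \<subseteq> S" by blast
  have "\<Inter>{C, crit_step R C} \<in> crit_tower R"
    using C(1) crit_tower.succ by (intro crit_tower.lim) auto
  moreover have "C \<inter> crit_step R C \<subseteq> max_space R derived_set_of C"
    using isolated_not_critical[OF AD crit_tower_subset[OF C(1)]] unfolding crit_step_def by blast
  then have "\<Inter>{C, crit_step R C} \<subseteq> S \<inter> (max_space R derived_set_of S)"
    using C(2) derived_set_of_mono[OF C(2)] by auto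
  ultimately show ?case by blast
next
  case (lim \<A>)
  then have "\<forall>S\<in>\<A>. \<exists>C. C \<in> crit_tower R \<and> C \<subseteq> S" by blast
  from bchoice[OF this] obtain f where f: "\<forall>S\<in>\<A>. f S \<in> crit_tower R \<and> f S \<subseteq> S" ..
  have "\<Inter>(f ` \<A>) \<in> crit_tower R"
    using f lim.hyps by (intro crit_tower.lim) auto
  moreover have "\<Inter>(f ` \<A>) \<subseteq> \<Inter>\<A>" using f by blast
  ultimately show ?case by blast
qed

lemma SP_scattered_if_scattered:
  assumes "almost_Dedekind R" "scattered_space (max_space R)"
  shows "SP_scattered R"
proof -
  obtain C where "C \<in> crit_tower R" "C \<subseteq> {}"
    using crit_tower_refines_CB_tower[OF assms(1)] assms(2) unfolding scattered_space_def by blast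
  then show ?thesis unfolding SP_scattered_def by simp
qed

section \<open>Countable maximal spaces are scattered\<close>

lemma closedin_CB_tower:
  assumes "t1_space X" "S \<in> CB_tower X"
  shows "closedin X S"
  using assms(2)
proof (induction rule: CB_tower.induct)
  case (succ S)
  then show ?case using closedin_derived_set_of_gen[OF assms(1)] by (intro closedin_Int) auto
next
  case (lim \<A>)
  then show ?case by (intro closedin_Inter) auto
qed simp

lemma perfect_kernel:
  shows "\<Inter>(CB_tower X) \<in> CB_tower X" "\<Inter>(CB_tower X) \<subseteq> X derived_set_of \<Inter>(CB_tower X)"
proof -
  show kernel: "\<Inter>(CB_tower X) \<in> CB_tower X"
    using CB_tower.base by (intro CB_tower.lim) auto
  have "\<Inter>(CB_tower X) \<subseteq> \<Inter>(CB_tower X) \<inter> X derived_set_of \<Inter>(CB_tower X)"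
    using CB_tower.succ[OF kernel] by (rule Inter_lower)
  then show "\<Inter>(CB_tower X) \<subseteq> X derived_set_of \<Inter>(CB_tower X)" by blast
qed

lemma max_ideal_mem_closedin:
  assumes R: "subring R" and S: "closedin (max_space R) S" and M: "M \<in> max_ideals R"
    and below: "\<forall>G. finite G \<and> G \<subseteq> M \<longrightarrow> (\<exists>P\<in>S. G \<subseteq> P)"
  shows "M \<in> S"
proof (rule ccontr)
  assume "M \<notin> S"
  then have M_nbhd: "M \<in> topspace (max_space R) - S" using M topspace_max_space[OF R] by simp
  have "openin (max_space R) (topspace (max_space R) - S)"
    using S by (simp add: closedin_def)
  then obtain G where G: "finite G" "G \<subseteq> M" "spec_V R G \<inter> max_ideals R \<subseteq> topspace (max_space R) - S"
    using max_space_open_nbhd[OF R _ M_nbhd] by blast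
  obtain P where "P \<in> S" "G \<subseteq> P" using below G(1,2) by blast
  moreover have "S \<subseteq> max_ideals R" using closedin_subset[OF S] topspace_max_space[OF R] by simp
  ultimately have "P \<in> spec_V R G \<inter> max_ideals R"
    using max_ideals_subset_Spec[OF R] unfolding spec_V_def by blast
  then show False using G(3) \<open>P \<in> S\<close> by blast
qed

lemma perfect_subset_extend:
  assumes R: "subring R" and S: "S \<subseteq> max_ideals R" "S \<subseteq> max_space R derived_set_of S"
    and F: "finite F" "F \<subseteq> P" "P \<in> S" and Q: "Q \<in> max_ideals R"
  obtains x P' where "P' \<in> S" "insert x F \<subseteq> P'" "x \<notin> Q"
proof -
  have P_max: "P \<in> max_ideals R" using F(3) S(1) by blast
  have "F \<subseteq> R" using F(2) prime_ideal_subset[OF max_ideals_prime[OF R P_max]] by blast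
  then have open_nbhd: "openin (max_space R) (spec_V R F \<inter> max_ideals R)"
    by (rule openin_max_space_spec_V[OF R F(1)])
  have P_nbhd: "P \<in> spec_V R F \<inter> max_ideals R"
    using F(2) P_max max_ideals_subset_Spec[OF R] unfolding spec_V_def by blast
  obtain Z where Z: "Z \<in> S" "F \<subseteq> Z" "Z \<noteq> Q"
  proof (cases "P = Q")
    case True
    have "P \<in> max_space R derived_set_of S" using S(2) F(3) by blast
    then have "\<exists>y. y \<noteq> P \<and> y \<in> S \<and> y \<in> spec_V R F \<inter> max_ideals R"
      using open_nbhd P_nbhd unfolding in_derived_set_of by blast
    then obtain y where "y \<noteq> P" "y \<in> S" "F \<subseteq> y" unfolding spec_V_def by blast
    then show thesis using that True by blast
  next
    case False
    then show thesis using that F(2,3) by blast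
  qed
  have "\<not> Z \<subseteq> Q" using maximal_ideal_not_subset Z(1,3) S(1) Q unfolding max_ideals_def by blast
  then obtain x where "x \<in> Z" "x \<notin> Q" by blast
  then show thesis using that Z(1,2) by blast
qed

lemma perfect_subset_separating_chain:
  assumes R: "subring R" and S: "S \<subseteq> max_ideals R" "S \<subseteq> max_space R derived_set_of S"
    and s: "\<And>n. s n \<in> max_ideals R" and "f0 \<in> P0" "P0 \<in> S"
  obtains F P :: "nat \<Rightarrow> 'k::field set"
  where "\<And>n. F n \<subseteq> P n" "\<And>n. P n \<in> S" "\<And>n. f0 \<in> F n"
    "\<And>n. F n \<subseteq> F (Suc n)" "\<And>n. \<not> F (Suc n) \<subseteq> s n"
proof -
  let ?inv = "\<lambda>x. finite (fst x) \<and> fst x \<subseteq> snd x \<and> snd x \<in> S \<and> f0 \<in> fst x"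
  have "\<exists>FP. \<forall>n. ?inv (FP n) \<and> (fst (FP n) \<subseteq> fst (FP (Suc n)) \<and> \<not> fst (FP (Suc n)) \<subseteq> s n)"
  proof (rule dependent_nat_choice)
    show "\<exists>x. ?inv x"
      using \<open>f0 \<in> P0\<close> \<open>P0 \<in> S\<close> by (intro exI[of _ "({f0}, P0)"]) simp
  next
    fix x n assume "?inv x"
    then have x: "finite (fst x)" "fst x \<subseteq> snd x" "snd x \<in> S" "f0 \<in> fst x" by auto
    obtain y P' where "P' \<in> S" "insert y (fst x) \<subseteq> P'" "y \<notin> s n"
      by (rule perfect_subset_extend[OF R S x(1-3) s])
    then show "\<exists>x'. ?inv x' \<and> (fst x \<subseteq> fst x' \<and> \<not> fst x' \<subseteq> s n)"
      using x by (intro exI[of _ "(insert y (fst x), P')"]) auto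
  qed
  then obtain FP where "\<And>n. ?inv (FP n)"
    "\<And>n. fst (FP n) \<subseteq> fst (FP (Suc n))" "\<And>n. \<not> fst (FP (Suc n)) \<subseteq> s n"
    by blast
  then show thesis using that[of "\<lambda>n. fst (FP n)" "\<lambda>n. snd (FP n)"] by blast
qed

lemma prime_ideal_above_chain:
  assumes R: "subring R" and S: "\<And>P. P \<in> S \<Longrightarrow> prime_ideal R P"
    and F: "\<And>n. F n \<subseteq> P n" "\<And>n. P n \<in> S" "\<And>n. F n \<subseteq> F (Suc n)"
  obtains J where "prime_ideal R J" "\<And>n. F n \<subseteq> J" "\<forall>G. finite G \<and> G \<subseteq> J \<longrightarrow> (\<exists>P\<in>S. G \<subseteq> P)"
proof -
  define A where "A n = ideal_gen R (F n)" for n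
  have A_ideal: "is_ideal R (A n)" for n
  proof -
    have "F n \<subseteq> R" using F(1,2) S prime_ideal_subset by blast
    then show ?thesis unfolding A_def by (rule is_ideal_ideal_gen[OF R])
  qed
  have A_below: "A n \<subseteq> P n" for n
    unfolding A_def using ideal_gen_least[OF prime_idealD(1)[OF S[OF F(2)]] F(1)] .
  have "A m \<subseteq> A n" if "m \<le> n" for m n
    unfolding A_def using lift_Suc_mono_le[of F, OF F(3) that] by (rule ideal_gen_mono)
  then have A_chain: "subset.chain UNIV (range A)"
    unfolding subset_chain_def using nat_le_linear by blast
  define I where "I = \<Union>(range A)"
  have I: "is_ideal R I"
    unfolding I_def using A_ideal A_chain unfolding subset_chain_def by (intro is_ideal_Union_chain) auto
  have I_below: "\<forall>G. finite G \<and> G \<subseteq> I \<longrightarrow> (\<exists>P\<in>S. G \<subseteq> P)"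
  proof (intro allI impI)
    fix G assume G: "finite G \<and> G \<subseteq> I"
    obtain B where "B \<in> range A" "G \<subseteq> B"
      using finite_subset_Union_chain[of G "range A"] G A_chain unfolding I_def by blast
    then show "\<exists>P\<in>S. G \<subseteq> P" using A_below F(2) by blast
  qed
  obtain J where J: "prime_ideal R J" "I \<subseteq> J"
    and J_below: "\<forall>G. finite G \<and> G \<subseteq> J \<longrightarrow> (\<exists>P\<in>S. G \<subseteq> P)"
    using exists_prime_ideal_finitely_below[OF R _ I I_below] S by blast
  have "F n \<subseteq> J" for n
    using subset_ideal_gen[OF subringD(2)[OF R]] J(2) unfolding I_def A_def by blast
  then show thesis using that J(1) J_below by blast
qed

lemma countable_perfect_subset_empty:
  assumes AD: "almost_Dedekind R" and "countable S" and S: "closedin (max_space R) S"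
    and perfect: "S \<subseteq> max_space R derived_set_of S"
  shows "S = {}"
proof (rule ccontr)
  assume "S \<noteq> {}"
  have R: "subring R" using almost_Dedekind_subring[OF AD] .
  have SM: "S \<subseteq> max_ideals R" using closedin_subset[OF S] topspace_max_space[OF R] by simp
  have S_prime: "\<And>P. P \<in> S \<Longrightarrow> prime_ideal R P" using SM max_ideals_prime[OF R] by blast
  define s where "s = from_nat_into S"
  have s: "range s = S" unfolding s_def using range_from_nat_into[OF \<open>S \<noteq> {}\<close> \<open>countable S\<close>] .
  then have s_max: "\<And>n. s n \<in> max_ideals R" using SM by blast
  obtain P0 where "P0 \<in> S" using \<open>S \<noteq> {}\<close> by blast
  then obtain f0 where "f0 \<in> P0" "f0 \<noteq> 0"
    using almost_Dedekind_max_ideal_nonzero[OF AD] SM by blast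
  obtain F P where F: "\<And>n. F n \<subseteq> P n" "\<And>n. P n \<in> S" "\<And>n. f0 \<in> F n"
    "\<And>n. F n \<subseteq> F (Suc n)" and F_sep: "\<And>n. \<not> F (Suc n) \<subseteq> s n"
    using perfect_subset_separating_chain[where s = s, OF R SM perfect s_max \<open>f0 \<in> P0\<close> \<open>P0 \<in> S\<close>]
    by blast
  obtain J where J: "prime_ideal R J" "\<And>n. F n \<subseteq> J"
    and J_below: "\<forall>G. finite G \<and> G \<subseteq> J \<longrightarrow> (\<exists>P\<in>S. G \<subseteq> P)"
    using prime_ideal_above_chain[where F = F and P = P, OF R S_prime F(1,2,4)] by blast
  obtain M where M: "M \<in> max_ideals R" "J \<subseteq> M"
    using exists_maximal_ideal_superset[OF R prime_idealD(1)[OF J(1)] prime_ideal_one_notin[OF J(1)]] by blast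
  have "f0 \<in> J" using J(2) F(3) by blast
  then have "J = M"
    using almost_Dedekind_nonzero_prime_eq_maximal[OF AD J(1) M] \<open>f0 \<noteq> 0\<close> by blast
  then have "J \<in> S"
    using max_ideal_mem_closedin[OF R S M(1)] J_below by simp
  then obtain n where "s n = J" using s by blast
  then show False using J(2)[of "Suc n"] F_sep[of n] by simp
qed

lemma scattered_if_countable:
  assumes AD: "almost_Dedekind R" and "countable (max_ideals R)"
  shows "scattered_space (max_space R)"
proof -
  have R: "subring R" using almost_Dedekind_subring[OF AD] .
  let ?S = "\<Inter>(CB_tower (max_space R))"
  have closed: "closedin (max_space R) ?S"
    using closedin_CB_tower[OF t1_space_max_space[OF R] perfect_kernel(1)] .
  then have "?S \<subseteq> max_ideals R"
    using closedin_subset topspace_max_space[OF R] by blast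
  then have "countable ?S"
    using \<open>countable (max_ideals R)\<close> countable_subset by blast
  then have "?S = {}"
    using countable_perfect_subset_empty[OF AD _ closed perfect_kernel(2)] by blast
  then show ?thesis using perfect_kernel(1)[of "max_space R"] unfolding scattered_space_def by simp
qed

theorem proposition5p5:
  fixes R :: "'k::field set"
  assumes "almost_Dedekind R" and "has_quotient_field_UNIV R"
  shows "(countable (max_ideals R) \<longrightarrow> scattered_space (max_space R))
       \<and> (scattered_space (max_space R) \<longrightarrow> SP_scattered R)"
  using scattered_if_countable[OF assms(1)] SP_scattered_if_scattered[OF assms(1)] by blast

end
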